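(* Let $(G,c)$ be a colored DAG and let $S_G=\{\prod_{i\in V}|\Sigma_{\mathrm{pa}_G(i)}|^{k_i}: k_i\in\mathbb N\}$ be the multiplicatively closed set generated by the parental principal minors. Then the vanishing ideal $P_{G,c}$ of $\mathcal M(G,c)$ equals $I_{G,c}:S_G$.
   Context: $\mathbb R[\Sigma]$ is the polynomial ring in symmetric variables $\sigma_{ij}=\sigma_{ji}$; $\Sigma_B$ principal submatrix (with $|\Sigma_\emptyset|=1$); $\Sigma_{ij|K}$ the submatrix with rows $(i,K)$, columns $(j,K)$; $J:S=\{f: fs\in J\text{ for some } s\in S\}$. $G=(V,E)$ a DAG with $V=[p]$ naturally ordered; $c:V\sqcup E\to C$, $c(V)\cap c(E)=\emptyset$. $\mathcal M(G,c)$ is the set of $(I-\Lambda)^{-T}\Omega(I-\Lambda)^{-1}$ with $\Omega=\mathrm{diag}(\omega_i)$, $\omega_i>0$, $\lambda_{ij}=0$ for $ij\notin E$, $\omega_i=\omega_k$ when $c(i)=c(k)$, $\lambda_{ij}=\lambda_{kl}$ when $c(ij)=c(kl)$; $P_{G,c}$ is the ideal of polynomials vanishing on $\mathcal M(G,c)$. $I_{G,c}$ is generated by: $|\Sigma_{ij|\mathrm{pa}(j)}|$ for $i<j$, $ij\notin E$; $|\Sigma_{\{i\}\cup\mathrm{pa}(i)}|\,|\Sigma_{\mathrm{pa}(j)}|-|\Sigma_{\{j\}\cup\mathrm{pa}(j)}|\,|\Sigma_{\mathrm{pa}(i)}|$ for $c(i)=c(j)$; $|\Sigma_{ij|\mathrm{pa}(j)\setminus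 i}|\,|\Sigma_{\mathrm{pa}(l)}|-|\Sigma_{kl|\mathrm{pa}(l)\setminus k}|\,|\Sigma_{\mathrm{pa}(j)}|$ for $c(ij)=c(kl)$. *)

theory Defs
  imports "Jordan_Normal_Form.Determinant" "HOL-Library.Poly_Mapping"
begin

text \<open>Polynomials in variables x_(a,b) with real coefficients, as finitely supported
  maps from monomials (finitely supported exponent vectors) to coefficients.
  The symmetric ring R[Sigma] on vertex set V = {0..<p} is the subring of polynomials
  using only the variables x_(a,b) with a \<le> b < p; sigma_ab = sigma_ba = x_(min,max).\<close>

type_synonym mpoly = "((nat \<times> nat) \<Rightarrow>\<^sub>0 nat) \<Rightarrow>\<^sub>0 real"

definition in_sym_ring :: "nat \<Rightarrow> mpoly \<Rightarrow> bool" where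
  "in_sym_ring p f \<longleftrightarrow> (\<forall>m \<in> Poly_Mapping.keys f. \<forall>v \<in> Poly_Mapping.keys m. fst v \<le> snd v \<and> snd v < p)"

definition sym_ring :: "nat \<Rightarrow> mpoly set" where
  "sym_ring p = {f. in_sym_ring p f}"

definition sigma :: "nat \<Rightarrow> nat \<Rightarrow> mpoly" where
  "sigma a b = Poly_Mapping.single (Poly_Mapping.single (min a b, max a b) 1) 1"

definition eval_poly :: "real mat \<Rightarrow> mpoly \<Rightarrow> real" where
  "eval_poly S f = (\<Sum>m \<in> Poly_Mapping.keys f. Poly_Mapping.lookup f m *
      (\<Prod>v \<in> Poly_Mapping.keys m. (S $$ (fst v, snd v)) ^ Poly_Mapping.lookup m v))"

definition submat_sym :: "nat list \<Rightarrow> nat list \<Rightarrow> mpoly mat" where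
  "submat_sym rs cs = mat (length rs) (length cs) (\<lambda>(a, b). sigma (rs ! a) (cs ! b))"

definition pminor :: "nat set \<Rightarrow> mpoly" where
  "pminor B = det (submat_sym (sorted_list_of_set B) (sorted_list_of_set B))"

definition cminor :: "nat \<Rightarrow> nat \<Rightarrow> nat set \<Rightarrow> mpoly" where
  "cminor i j K = det (submat_sym (i # sorted_list_of_set K) (j # sorted_list_of_set K))"

definition pa :: "(nat \<times> nat) set \<Rightarrow> nat \<Rightarrow> nat set" where
  "pa E j = {i. (i, j) \<in> E}"

text \<open>DAG on V = {0..<p}, naturally ordered: every edge (i,j) has i < j.\<close>
definition dag :: "nat \<Rightarrow> (nat \<times> nat) set \<Rightarrow> bool" where
  "dag p E \<longleftrightarrow> (\<forall>(i, j) \<in> E. i < j \<and> j < p)"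

definition coloring :: "nat \<Rightarrow> (nat \<times> nat) set \<Rightarrow> (nat \<Rightarrow> 'c) \<Rightarrow> (nat \<times> nat \<Rightarrow> 'c) \<Rightarrow> bool" where
  "coloring p E cV cE \<longleftrightarrow> cV ` {0..<p} \<inter> cE ` E = {}"

definition model :: "nat \<Rightarrow> (nat \<times> nat) set \<Rightarrow> (nat \<Rightarrow> 'c) \<Rightarrow> (nat \<times> nat \<Rightarrow> 'c) \<Rightarrow> real mat set" where
  "model p E cV cE = {transpose_mat B * Om * B | B Om Lam.
      Lam \<in> carrier_mat p p \<and> Om \<in> carrier_mat p p \<and> B \<in> carrier_mat p p \<and>
      (\<forall>i<p. \<forall>j<p. i \<noteq> j \<longrightarrow> Om $$ (i, j) = 0) \<and>
      (\<forall>i<p. Om $$ (i, i) > 0) \<and>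
      (\<forall>i<p. \<forall>j<p. (i, j) \<notin> E \<longrightarrow> Lam $$ (i, j) = 0) \<and>
      (\<forall>i<p. \<forall>k<p. cV i = cV k \<longrightarrow> Om $$ (i, i) = Om $$ (k, k)) \<and>
      (\<forall>(i, j) \<in> E. \<forall>(k, l) \<in> E. cE (i, j) = cE (k, l) \<longrightarrow> Lam $$ (i, j) = Lam $$ (k, l)) \<and>
      inverts_mat (1\<^sub>m p - Lam) B \<and> inverts_mat B (1\<^sub>m p - Lam)}"

definition vanishing_ideal :: "nat \<Rightarrow> (nat \<times> nat) set \<Rightarrow> (nat \<Rightarrow> 'c) \<Rightarrow> (nat \<times> nat \<Rightarrow> 'c) \<Rightarrow> mpoly set" where
  "vanishing_ideal p E cV cE =
     {f \<in> sym_ring p. \<forall>S \<in> model p E cV cE. eval_poly S f = 0}"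

definition ideal_gen :: "nat \<Rightarrow> mpoly set \<Rightarrow> mpoly set" where
  "ideal_gen p A = {f. \<exists>F h. finite F \<and> F \<subseteq> A \<and> (\<forall>g \<in> F. h g \<in> sym_ring p) \<and>
                          f = (\<Sum>g \<in> F. h g * g)}"

definition colon :: "nat \<Rightarrow> mpoly set \<Rightarrow> mpoly set \<Rightarrow> mpoly set" where
  "colon p J S = {f \<in> sym_ring p. \<exists>s \<in> S. f * s \<in> J}"

definition gens :: "nat \<Rightarrow> (nat \<times> nat) set \<Rightarrow> (nat \<Rightarrow> 'c) \<Rightarrow> (nat \<times> nat \<Rightarrow> 'c) \<Rightarrow> mpoly set" where
  "gens p E cV cE =
     {cminor i j (pa E j) | i j. i < j \<and> j < p \<and> (i, j) \<notin> E}
   \<union> {pminor (insert i (pa E i)) * pminor (pa E j) - pminor (insert j (pa E j)) * pminor (pa E i)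
        | i j. i < p \<and> j < p \<and> cV i = cV j}
   \<union> {cminor i j (pa E j - {i}) * pminor (pa E l) - cminor k l (pa E l - {k}) * pminor (pa E j)
        | i j k l. (i, j) \<in> E \<and> (k, l) \<in> E \<and> cE (i, j) = cE (k, l)}"

definition I_Gc :: "nat \<Rightarrow> (nat \<times> nat) set \<Rightarrow> (nat \<Rightarrow> 'c) \<Rightarrow> (nat \<times> nat \<Rightarrow> 'c) \<Rightarrow> mpoly set" where
  "I_Gc p E cV cE = ideal_gen p (gens p E cV cE)"

definition S_G :: "nat \<Rightarrow> (nat \<times> nat) set \<Rightarrow> mpoly set" where
  "S_G p E = {\<Prod>i \<in> {0..<p}. pminor (pa E i) ^ k i | k. True}"

end

theory Submission
  imports Defs
begin

text \<open>Every point of the model is \<open>\<Sigma> = (I - \<Lambda>)\<^sup>-\<^sup>T \<Omega> (I - \<Lambda>)\<^sup>-\<^sup>1\<close> with \<open>\<Sigma>\<close> positive definite,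
  and Cramer's rule recovers the parameters from it:
  \<open>\<lambda>_kj = |\<Sigma>_{kj|pa(j)-k}| / |\<Sigma>_pa(j)|\<close> and \<open>\<omega>_j = |\<Sigma>_{j \<union> pa(j)}| / |\<Sigma>_pa(j)|\<close>, while
  \<open>|\<Sigma>_{ij|pa(j)}| = 0\<close> for \<open>i < j\<close>. Hence the generators of \<open>I_{G,c}\<close> vanish on the model and
  the parental minors are positive there, which gives \<open>I_{G,c} : S_G \<subseteq> P_{G,c}\<close>.

  Conversely, read these formulas as polynomials, clearing denominators with the product \<open>D\<close> of
  the parental minors and taking the parameters of one representative per colour class. Modulo
  \<open>I_{G,c} : S_G\<close> the matrix \<open>(I - \<Lambda>)\<^sup>T \<Sigma> (I - \<Lambda>)\<close> is congruent to \<open>\<Omega>\<close>, so \<open>D^2p \<sigma>_ij\<close> is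
  congruent to a polynomial \<open>P_ij\<close> which at every positive definite \<open>\<Sigma>\<close> is a positive multiple
  of a point of the model. For \<open>f \<in> P_{G,c}\<close>, a power of \<open>D\<close> times \<open>f\<close> is thus congruent to the
  homogenized \<open>f(P)\<close>, which vanishes on all positive definite matrices and hence is the zero
  polynomial.\<close>

section \<open>Substitution into polynomials\<close>

definition monom_val :: "((nat \<times> nat) \<Rightarrow> 'a::comm_ring_1) \<Rightarrow> ((nat \<times> nat) \<Rightarrow>\<^sub>0 nat) \<Rightarrow> 'a" where
  "monom_val x m = (\<Prod>v\<in>Poly_Mapping.keys m. x v ^ Poly_Mapping.lookup m v)"

definition poly_subst :: "(real \<Rightarrow> 'a::comm_ring_1) \<Rightarrow> ((nat \<times> nat) \<Rightarrow> 'a) \<Rightarrow> mpoly \<Rightarrow> 'a" where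
  "poly_subst h x f = (\<Sum>m\<in>Poly_Mapping.keys f. h (Poly_Mapping.lookup f m) * monom_val x m)"

lemma monom_val_superset:
  assumes "finite K" "Poly_Mapping.keys m \<subseteq> K"
  shows "monom_val x m = (\<Prod>v\<in>K. x v ^ Poly_Mapping.lookup m v)"
  unfolding monom_val_def
  by (rule prod.mono_neutral_left[OF assms]) (auto simp: in_keys_iff)

lemma monom_val_zero [simp]: "monom_val x 0 = 1"
  by (simp add: monom_val_def)

lemma monom_val_add: "monom_val x (m + n) = monom_val x m * monom_val x n"
proof -
  let ?K = "Poly_Mapping.keys m \<union> Poly_Mapping.keys n"
  have "monom_val x (m + n) = (\<Prod>v\<in>?K. x v ^ Poly_Mapping.lookup (m + n) v)"
    by (rule monom_val_superset) (use keys_add[of m n] in auto)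
  also have "\<dots> = (\<Prod>v\<in>?K. x v ^ Poly_Mapping.lookup m v) * (\<Prod>v\<in>?K. x v ^ Poly_Mapping.lookup n v)"
    by (simp add: lookup_add power_add prod.distrib)
  also have "\<dots> = monom_val x m * monom_val x n"
    by (subst (1 2) monom_val_superset[of ?K]) auto
  finally show ?thesis .
qed

lemma monom_val_cong:
  "(\<And>v. v \<in> Poly_Mapping.keys m \<Longrightarrow> x v = y v) \<Longrightarrow> monom_val x m = monom_val y m"
  unfolding monom_val_def by auto

lemma monom_val_single: "monom_val x (Poly_Mapping.single v 1) = x v"
  unfolding monom_val_def by simp

definition monom_deg :: "((nat \<times> nat) \<Rightarrow>\<^sub>0 nat) \<Rightarrow> nat" where
  "monom_deg m = (\<Sum>v\<in>Poly_Mapping.keys m. Poly_Mapping.lookup m v)"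

lemma monom_val_scale: "monom_val (\<lambda>v. c * y v) m = c ^ monom_deg m * monom_val y m"
  unfolding monom_val_def monom_deg_def by (simp add: power_mult_distrib prod.distrib power_sum)

lemma hom_monom_val:
  assumes "comm_ring_hom h"
  shows "h (monom_val y m) = monom_val (\<lambda>v. h (y v)) m"
proof -
  interpret comm_ring_hom h by fact
  show ?thesis unfolding monom_val_def by (simp add: hom_prod hom_power)
qed

lemma poly_subst_superset:
  assumes "h 0 = 0" "finite M" "Poly_Mapping.keys f \<subseteq> M"
  shows "poly_subst h x f = (\<Sum>m\<in>M. h (Poly_Mapping.lookup f m) * monom_val x m)"
  unfolding poly_subst_def
  by (rule sum.mono_neutral_left[OF assms(2,3)]) (auto simp: in_keys_iff assms(1))

lemma poly_subst_add:
  assumes "h 0 = 0" "\<And>a b. h (a + b) = h a + h b"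
  shows "poly_subst h x (f + g) = poly_subst h x f + poly_subst h x g"
proof -
  let ?M = "Poly_Mapping.keys f \<union> Poly_Mapping.keys g"
  have "poly_subst h x (f + g) = (\<Sum>m\<in>?M. h (Poly_Mapping.lookup (f + g) m) * monom_val x m)"
    by (rule poly_subst_superset) (use assms keys_add[of f g] in auto)
  also have "\<dots> = (\<Sum>m\<in>?M. h (Poly_Mapping.lookup f m) * monom_val x m)
      + (\<Sum>m\<in>?M. h (Poly_Mapping.lookup g m) * monom_val x m)"
    by (simp add: lookup_add assms(2) distrib_right sum.distrib)
  also have "\<dots> = poly_subst h x f + poly_subst h x g"
    by (subst (1 2) poly_subst_superset[of h ?M]) (use assms in auto)
  finally show ?thesis .
qed

lemma poly_subst_single:
  "h 0 = 0 \<Longrightarrow> poly_subst h x (Poly_Mapping.single m c) = h c * monom_val x m"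
  by (cases "c = 0") (auto simp: poly_subst_def)

lemma poly_subst_zero [simp]: "poly_subst h x 0 = 0"
  by (simp add: poly_subst_def)

lemma poly_eq_sum_singles:
  "f = (\<Sum>m\<in>Poly_Mapping.keys f. Poly_Mapping.single m (Poly_Mapping.lookup f m))"
  by (rule poly_mapping_eqI) (auto simp: lookup_sum lookup_single when_def in_keys_iff sum.delta')

lemma poly_subst_sum:
  assumes "h 0 = 0" "\<And>a b. h (a + b) = h a + h b"
  shows "poly_subst h x (sum F A) = (\<Sum>a\<in>A. poly_subst h x (F a))"
  by (induction A rule: infinite_finite_induct) (auto simp: poly_subst_add[OF assms])

lemma poly_subst_mult:
  assumes "comm_ring_hom h"
  shows "poly_subst h x (f * g) = poly_subst h x f * poly_subst h x g"
proof -
  interpret comm_ring_hom h by fact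
  have h0: "h 0 = 0" and hadd: "\<And>a b. h (a + b) = h a + h b" by (auto simp: hom_add)
  let ?S = "\<lambda>f. \<Sum>m\<in>Poly_Mapping.keys f. Poly_Mapping.single m (Poly_Mapping.lookup f m)"
  have "f * g = ?S f * ?S g"
    by (subst (1) poly_eq_sum_singles, subst (2) poly_eq_sum_singles) (rule refl)
  also have "\<dots> = (\<Sum>n\<in>Poly_Mapping.keys g. \<Sum>m\<in>Poly_Mapping.keys f.
      Poly_Mapping.single (m + n) (Poly_Mapping.lookup f m * Poly_Mapping.lookup g n))"
    by (simp add: sum_distrib_left sum_distrib_right mult_single)
  finally have fg: "f * g = \<dots>" .
  have "poly_subst h x (f * g) = (\<Sum>n\<in>Poly_Mapping.keys g. \<Sum>m\<in>Poly_Mapping.keys f.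
      h (Poly_Mapping.lookup f m) * monom_val x m * (h (Poly_Mapping.lookup g n) * monom_val x n))"
    unfolding fg
    by (simp add: poly_subst_sum[OF h0 hadd] poly_subst_single[of h, OF h0] hom_mult monom_val_add ac_simps)
  also have "\<dots> = poly_subst h x f * poly_subst h x g"
    by (simp add: poly_subst_def sum_distrib_left sum_distrib_right)
  finally show ?thesis .
qed

lemma poly_subst_hom:
  assumes "comm_ring_hom h"
  shows "comm_ring_hom (poly_subst h x)"
proof -
  interpret comm_ring_hom h by fact
  have "poly_subst h x 1 = 1"
    using poly_subst_single[of h x 0 1] by (simp flip: single_one)
  then show ?thesis
    by unfold_locales (auto simp: poly_subst_add hom_add poly_subst_mult[OF assms])
qed

lemma id_comm_ring_hom: "comm_ring_hom (\<lambda>c::real. c)"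
  by unfold_locales auto

definition const_poly :: "real \<Rightarrow> mpoly" where
  "const_poly c = Poly_Mapping.single 0 c"

lemma const_poly_hom: "comm_ring_hom const_poly"
  by unfold_locales (auto simp: const_poly_def single_add mult_single)

definition pvar :: "nat \<times> nat \<Rightarrow> mpoly" where
  "pvar v = Poly_Mapping.single (Poly_Mapping.single v 1) 1"

lemma pvar_power: "pvar v ^ n = Poly_Mapping.single (Poly_Mapping.single v n) 1"
proof (induction n)
  case (Suc n)
  have "pvar v ^ Suc n = Poly_Mapping.single (Poly_Mapping.single v 1 + Poly_Mapping.single v n) 1"
    unfolding power_Suc Suc.IH by (simp only: pvar_def mult_single) simp
  then show ?case by (simp add: single_add[symmetric])
qed simp

lemma monom_val_pvar: "monom_val pvar m = Poly_Mapping.single m 1"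
proof -
  have "monom_val pvar m = (\<Prod>v\<in>Poly_Mapping.keys m.
      Poly_Mapping.single (Poly_Mapping.single v (Poly_Mapping.lookup m v)) 1)"
    unfolding monom_val_def pvar_power ..
  also have "\<dots> = Poly_Mapping.single (\<Sum>v\<in>Poly_Mapping.keys m. Poly_Mapping.single v (Poly_Mapping.lookup m v)) 1"
    by (induction rule: finite_induct[OF finite_keys]) (auto simp: mult_single)
  also have "\<dots> = Poly_Mapping.single m 1"
    by (subst (2) poly_eq_sum_singles) (rule refl)
  finally show ?thesis .
qed

lemma poly_eq_sum_monoms:
  "f = (\<Sum>m\<in>Poly_Mapping.keys f. const_poly (Poly_Mapping.lookup f m) * monom_val pvar m)"
  by (subst (1) poly_eq_sum_singles) (simp add: monom_val_pvar const_poly_def mult_single)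

lemma sigma_pvar: "sigma a b = pvar (min a b, max a b)"
  by (simp add: sigma_def pvar_def)

lemma sigma_commute: "sigma a b = sigma b a"
  unfolding sigma_def by (simp add: min.commute max.commute)

lemma eval_poly_eq_poly_subst: "eval_poly S f = poly_subst (\<lambda>c. c) (\<lambda>v. S $$ v) f"
  unfolding eval_poly_def poly_subst_def monom_val_def by simp

section \<open>Variables of a polynomial and the identity theorem\<close>

definition vars_in :: "(nat \<times> nat) set \<Rightarrow> mpoly \<Rightarrow> bool" where
  "vars_in V f \<longleftrightarrow> (\<forall>m\<in>Poly_Mapping.keys f. Poly_Mapping.keys m \<subseteq> V)"

definition sym_vars :: "nat \<Rightarrow> (nat \<times> nat) set" where
  "sym_vars p = {v. fst v \<le> snd v \<and> snd v < p}"

lemma sym_ring_iff_vars_in: "f \<in> sym_ring p \<longleftrightarrow> vars_in (sym_vars p) f"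
  unfolding sym_ring_def in_sym_ring_def vars_in_def sym_vars_def by auto

lemma finite_sym_vars: "finite (sym_vars p)"
  by (rule finite_subset[of _ "{..<p} \<times> {..<p}"]) (auto simp: sym_vars_def)

lemma vars_in_zero [simp]: "vars_in V 0"
  and vars_in_one [simp]: "vars_in V 1"
  and vars_in_const_poly [simp]: "vars_in V (const_poly c)"
  by (simp_all add: vars_in_def const_poly_def)

lemma vars_in_add: "vars_in V f \<Longrightarrow> vars_in V g \<Longrightarrow> vars_in V (f + g)"
  unfolding vars_in_def using keys_add[of f g] by blast

lemma vars_in_uminus: "vars_in V f \<Longrightarrow> vars_in V (- f)"
  unfolding vars_in_def by (auto simp: in_keys_iff lookup_uminus)

lemma vars_in_diff: "vars_in V f \<Longrightarrow> vars_in V g \<Longrightarrow> vars_in V (f - g)"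
  by (metis diff_conv_add_uminus vars_in_add vars_in_uminus)

lemma vars_in_mult:
  assumes "vars_in V f" "vars_in V g"
  shows "vars_in V (f * g)"
  unfolding vars_in_def
proof
  fix m assume "m \<in> Poly_Mapping.keys (f * g)"
  then obtain a b where "m = a + b" "a \<in> Poly_Mapping.keys f" "b \<in> Poly_Mapping.keys g"
    using keys_mult[of f g] by blast
  then show "Poly_Mapping.keys m \<subseteq> V"
    using assms keys_add[of a b] unfolding vars_in_def by blast
qed

lemma vars_in_sum: "(\<And>a. a \<in> A \<Longrightarrow> vars_in V (F a)) \<Longrightarrow> vars_in V (sum F A)"
  by (induction A rule: infinite_finite_induct) (auto intro: vars_in_add)

lemma vars_in_prod: "(\<And>a. a \<in> A \<Longrightarrow> vars_in V (F a)) \<Longrightarrow> vars_in V (prod F A)"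
  by (induction A rule: infinite_finite_induct) (auto intro: vars_in_mult)

lemma vars_in_power: "vars_in V f \<Longrightarrow> vars_in V (f ^ n)"
  by (induction n) (auto intro: vars_in_mult)

lemma vars_in_monom_val:
  "(\<And>v. v \<in> Poly_Mapping.keys m \<Longrightarrow> vars_in V (y v)) \<Longrightarrow> vars_in V (monom_val y m)"
  unfolding monom_val_def by (intro vars_in_prod vars_in_power) auto

lemma vars_in_pvar: "v \<in> V \<Longrightarrow> vars_in V (pvar v)"
  by (simp add: vars_in_def pvar_def)

lemma vars_in_sigma: "a < p \<Longrightarrow> b < p \<Longrightarrow> vars_in (sym_vars p) (sigma a b)"
  by (auto simp: sigma_pvar sym_vars_def intro!: vars_in_pvar)

lemma vars_in_det:
  assumes "\<And>i j. i < dim_row A \<Longrightarrow> j < dim_col A \<Longrightarrow> vars_in V (A $$ (i, j))"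
  shows "vars_in V (det A)"
  unfolding det_def
proof (cases "dim_row A = dim_col A")
  case True
  show "vars_in V (if dim_row A = dim_col A then \<Sum>p\<in>{p. p permutes {0..<dim_row A}}. signof p * (\<Prod>i = 0..<dim_row A. A $$ (i, p i)) else 0)"
    using True
  proof (simp, intro vars_in_sum vars_in_mult vars_in_prod)
    fix p i assume p: "p \<in> {p. p permutes {0..<dim_col A}}" and i: "i \<in> {0..<dim_col A}"
    then have "p i < dim_col A" by (auto dest: permutes_in_image)
    then show "vars_in V (A $$ (i, p i))" using i True assms by auto
  next
    fix p show "vars_in V (signof p)" by (simp add: sign_def vars_in_uminus)
  qed
qed simp

lemma poly_subst_cong_vars:
  "vars_in V f \<Longrightarrow> (\<And>v. v \<in> V \<Longrightarrow> x v = y v) \<Longrightarrow> poly_subst h x f = poly_subst h y f"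
  unfolding poly_subst_def vars_in_def
  by (intro sum.cong refl arg_cong2[where f="(*)"] monom_val_cong) blast

lemma eval_poly_sym_ring:
  assumes "f \<in> sym_ring p" "\<And>i j. i \<le> j \<Longrightarrow> j < p \<Longrightarrow> S $$ (i, j) = s i j"
  shows "eval_poly S f = poly_subst (\<lambda>c. c) (\<lambda>v. s (fst v) (snd v)) f"
  unfolding eval_poly_eq_poly_subst
  by (rule poly_subst_cong_vars[of "sym_vars p"]) (use assms in \<open>auto simp: sym_ring_iff_vars_in sym_vars_def\<close>)

definition var_coeff :: "nat \<times> nat \<Rightarrow> nat \<Rightarrow> mpoly \<Rightarrow> mpoly" where
  "var_coeff v k f = (\<Sum>m\<in>{m \<in> Poly_Mapping.keys f. Poly_Mapping.lookup m v = k}.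
      Poly_Mapping.single (Poly_Mapping.update v 0 m) (Poly_Mapping.lookup f m))"

lemma vars_in_var_coeff:
  assumes "vars_in (insert v V) f"
  shows "vars_in V (var_coeff v k f)"
  unfolding var_coeff_def
proof (rule vars_in_sum)
  fix m assume "m \<in> {m \<in> Poly_Mapping.keys f. Poly_Mapping.lookup m v = k}"
  then have "Poly_Mapping.keys m \<subseteq> insert v V" using assms unfolding vars_in_def by auto
  then show "vars_in V (Poly_Mapping.single (Poly_Mapping.update v 0 m) (Poly_Mapping.lookup f m))"
    by (auto simp: vars_in_def keys_update)
qed

lemma monom_val_split_var:
  "monom_val x m = x v ^ Poly_Mapping.lookup m v * monom_val x (Poly_Mapping.update v 0 m)"
proof -
  let ?K = "insert v (Poly_Mapping.keys m)"
  let ?m' = "Poly_Mapping.update v 0 m"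
  have "monom_val x m = (\<Prod>u\<in>?K. x u ^ Poly_Mapping.lookup m u)"
    by (rule monom_val_superset) auto
  also have "\<dots> = x v ^ Poly_Mapping.lookup m v * (\<Prod>u\<in>?K - {v}. x u ^ Poly_Mapping.lookup m u)"
    by (rule prod.remove) auto
  also have "(\<Prod>u\<in>?K - {v}. x u ^ Poly_Mapping.lookup m u) = (\<Prod>u\<in>?K. x u ^ Poly_Mapping.lookup ?m' u)"
  proof -
    have "(\<Prod>u\<in>?K. x u ^ Poly_Mapping.lookup ?m' u)
        = x v ^ Poly_Mapping.lookup ?m' v * (\<Prod>u\<in>?K - {v}. x u ^ Poly_Mapping.lookup ?m' u)"
      by (rule prod.remove) auto
    also have "\<dots> = (\<Prod>u\<in>?K - {v}. x u ^ Poly_Mapping.lookup m u)"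
      by (simp add: lookup_update, rule prod.cong[OF refl], auto)
    finally show ?thesis by simp
  qed
  also have "\<dots> = monom_val x ?m'"
    by (rule monom_val_superset[symmetric]) (auto simp: keys_update)
  finally show ?thesis .
qed

lemma poly_subst_var_coeffs:
  "poly_subst (\<lambda>c. c) x f = (\<Sum>k\<in>(\<lambda>m. Poly_Mapping.lookup m v) ` Poly_Mapping.keys f.
      x v ^ k * poly_subst (\<lambda>c. c) x (var_coeff v k f))"
proof -
  have "poly_subst (\<lambda>c. c) x f = (\<Sum>m\<in>Poly_Mapping.keys f.
      Poly_Mapping.lookup f m * (x v ^ Poly_Mapping.lookup m v * monom_val x (Poly_Mapping.update v 0 m)))"
    unfolding poly_subst_def by (subst monom_val_split_var[of x _ v]) simp
  also have "\<dots> = (\<Sum>k\<in>(\<lambda>m. Poly_Mapping.lookup m v) ` Poly_Mapping.keys f.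
      \<Sum>m\<in>{m \<in> Poly_Mapping.keys f. Poly_Mapping.lookup m v = k}.
        Poly_Mapping.lookup f m * (x v ^ Poly_Mapping.lookup m v * monom_val x (Poly_Mapping.update v 0 m)))"
    by (rule sum.group[symmetric]) auto
  also have "\<dots> = (\<Sum>k\<in>(\<lambda>m. Poly_Mapping.lookup m v) ` Poly_Mapping.keys f.
      x v ^ k * poly_subst (\<lambda>c. c) x (var_coeff v k f))"
    unfolding var_coeff_def by (simp add: poly_subst_sum poly_subst_single sum_distrib_left ac_simps)
  finally show ?thesis .
qed

lemma lookup_var_coeff:
  assumes "m \<in> Poly_Mapping.keys f"
  shows "Poly_Mapping.lookup (var_coeff v (Poly_Mapping.lookup m v) f) (Poly_Mapping.update v 0 m)
    = Poly_Mapping.lookup f m"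
proof -
  have upd_eq: "Poly_Mapping.update v 0 m' = Poly_Mapping.update v 0 m \<longleftrightarrow> m' = m"
    if "Poly_Mapping.lookup m' v = Poly_Mapping.lookup m v" for m'
  proof
    assume e: "Poly_Mapping.update v 0 m' = Poly_Mapping.update v 0 m"
    show "m' = m"
    proof (rule poly_mapping_eqI)
      fix u show "Poly_Mapping.lookup m' u = Poly_Mapping.lookup m u"
        using that arg_cong[OF e, of "\<lambda>g. Poly_Mapping.lookup g u"] by (auto simp: lookup_update split: if_splits)
    qed
  qed simp
  have "Poly_Mapping.lookup (var_coeff v (Poly_Mapping.lookup m v) f) (Poly_Mapping.update v 0 m)
      = (\<Sum>m'\<in>{m' \<in> Poly_Mapping.keys f. Poly_Mapping.lookup m' v = Poly_Mapping.lookup m v}.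
          if m' = m then Poly_Mapping.lookup f m' else 0)"
    unfolding var_coeff_def lookup_sum by (intro sum.cong refl) (auto simp: lookup_single when_def upd_eq)
  then show ?thesis using assms by (simp add: sum.delta')
qed

lemma sum_powers_eq_zero_imp:
  fixes c :: "nat \<Rightarrow> real"
  assumes "finite T" "infinite A" "\<And>t. t \<in> A \<Longrightarrow> (\<Sum>k\<in>T. t ^ k * c k) = 0" "k \<in> T"
  shows "c k = 0"
proof -
  define q where "q = (\<Sum>k\<in>T. monom (c k) k)"
  have "poly q t = 0" if "t \<in> A" for t
    using assms(3)[OF that] by (simp add: q_def poly_sum poly_monom ac_simps)
  then have "A \<subseteq> {t. poly q t = 0}" by auto
  then have "q = 0" using poly_roots_finite[of q] assms(2) finite_subset by blast
  then have "coeff q k = 0" by simp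
  then show ?thesis unfolding q_def coeff_sum using assms(1,4) by (simp add: sum.delta)
qed

lemma vars_in_empty_eq_zero:
  assumes "vars_in {} f" "poly_subst (\<lambda>c. c) x f = (0::real)"
  shows "f = 0"
proof -
  have keys: "Poly_Mapping.keys f \<subseteq> {0}" using assms(1) unfolding vars_in_def by auto
  then have "poly_subst (\<lambda>c. c) x f = Poly_Mapping.lookup f 0"
    by (subst poly_subst_superset[of _ "{0}"]) auto
  then have "Poly_Mapping.lookup f 0 = 0" using assms(2) by simp
  moreover have "Poly_Mapping.lookup f m = 0" if "m \<noteq> 0" for m
  proof -
    have "m \<notin> Poly_Mapping.keys f" using keys that by auto
    then show ?thesis by (simp add: not_in_keys_iff_lookup_eq_zero)
  qed
  ultimately have "Poly_Mapping.lookup f m = 0" for m by (cases "m = 0") auto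
  then show ?thesis by (intro poly_mapping_eqI) simp
qed

lemma identity_theorem:
  assumes "finite V" "vars_in V f" "\<And>v. infinite (A v)"
    and "\<And>x. (\<And>v. v \<in> V \<Longrightarrow> x v \<in> A v) \<Longrightarrow> poly_subst (\<lambda>c. c) x f = (0::real)"
  shows "f = 0"
  using assms(1,2,4)
proof (induction V arbitrary: f rule: finite_induct)
  case empty
  then show ?case using vars_in_empty_eq_zero[of f "\<lambda>_. 0"] by simp
next
  case (insert v V f)
  let ?T = "(\<lambda>m. Poly_Mapping.lookup m v) ` Poly_Mapping.keys f"
  have coeff_zero: "var_coeff v k f = 0" if "k \<in> ?T" for k
  proof (rule insert.IH[OF vars_in_var_coeff[OF insert.prems(1)]])
    fix x :: "nat \<times> nat \<Rightarrow> real" assume x: "\<And>u. u \<in> V \<Longrightarrow> x u \<in> A u"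
    have vanish: "(\<Sum>k\<in>?T. t ^ k * poly_subst (\<lambda>c. c) x (var_coeff v k f)) = 0" if "t \<in> A v" for t
    proof -
      have "poly_subst (\<lambda>c. c) (x(v := t)) (var_coeff v k f) = poly_subst (\<lambda>c. c) x (var_coeff v k f)" for k
        by (rule poly_subst_cong_vars[OF vars_in_var_coeff[OF insert.prems(1)]]) (use insert.hyps in auto)
      then have "poly_subst (\<lambda>c. c) (x(v := t)) f = (\<Sum>k\<in>?T. t ^ k * poly_subst (\<lambda>c. c) x (var_coeff v k f))"
        by (simp add: poly_subst_var_coeffs[of "x(v := t)" f v])
      moreover have "poly_subst (\<lambda>c. c) (x(v := t)) f = 0"
        by (rule insert.prems(2)) (use x that in auto)
      ultimately show ?thesis by simp
    qed
    show "poly_subst (\<lambda>c. c) x (var_coeff v k f) = 0"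
      by (rule sum_powers_eq_zero_imp[OF _ assms(3) vanish that]) simp
  qed
  show ?case
  proof (rule poly_mapping_eqI)
    fix m
    show "Poly_Mapping.lookup f m = Poly_Mapping.lookup 0 m"
    proof (cases "m \<in> Poly_Mapping.keys f")
      case True
      then show ?thesis using lookup_var_coeff[OF True, of v] coeff_zero by simp
    qed (simp add: in_keys_iff)
  qed
qed

section \<open>Ideals of the polynomial ring\<close>

definition restrict_vars :: "(nat \<times> nat) set \<Rightarrow> mpoly \<Rightarrow> mpoly" where
  "restrict_vars V = poly_subst const_poly (\<lambda>v. if v \<in> V then pvar v else 0)"

lemma restrict_vars_hom: "comm_ring_hom (restrict_vars V)"
  unfolding restrict_vars_def by (rule poly_subst_hom[OF const_poly_hom])

lemma poly_subst_const_poly_pvar: "poly_subst const_poly pvar f = f"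
  unfolding poly_subst_def by (rule poly_eq_sum_monoms[symmetric])

lemma restrict_vars_id: "vars_in V f \<Longrightarrow> restrict_vars V f = f"
  unfolding restrict_vars_def
  by (subst poly_subst_cong_vars[of V f _ pvar]) (auto simp: poly_subst_const_poly_pvar)

lemma vars_in_restrict_vars: "vars_in V (restrict_vars V f)"
  unfolding restrict_vars_def poly_subst_def
proof (rule vars_in_sum, rule vars_in_mult)
  fix m
  show "vars_in V (monom_val (\<lambda>v. if v \<in> V then pvar v else 0) m)"
  proof (cases "Poly_Mapping.keys m \<subseteq> V")
    case True
    then have "monom_val (\<lambda>v. if v \<in> V then pvar v else 0) m = monom_val pvar m"
      by (intro monom_val_cong) auto
    then show ?thesis using True by (simp add: monom_val_pvar vars_in_def)
  next
    case False
    then obtain v where v: "v \<in> Poly_Mapping.keys m" "v \<notin> V" by auto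
    have "monom_val (\<lambda>v. if v \<in> V then pvar v else 0) m = 0"
      unfolding monom_val_def
      apply (rule prod_zero, simp)
      apply (rule bexI[of _ v])
      using v by (auto simp: in_keys_iff zero_power)
    then show ?thesis by simp
  qed
qed simp

inductive_set ideal_span :: "mpoly set \<Rightarrow> mpoly set" for G where
  span_zero: "0 \<in> ideal_span G"
| span_gen: "g \<in> G \<Longrightarrow> g \<in> ideal_span G"
| span_add: "a \<in> ideal_span G \<Longrightarrow> b \<in> ideal_span G \<Longrightarrow> a + b \<in> ideal_span G"
| span_mult: "a \<in> ideal_span G \<Longrightarrow> r * a \<in> ideal_span G"

lemma ideal_span_finite_sum:
  assumes "x \<in> ideal_span G"
  shows "\<exists>F h. finite F \<and> F \<subseteq> G \<and> x = (\<Sum>g\<in>F. h g * g)"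
  using assms
proof induction
  case span_zero then show ?case by (intro exI[of _ "{}"]) auto
next
  case (span_gen g) then show ?case by (intro exI[of _ "{g}"] exI[of _ "\<lambda>_. 1"]) auto
next
  case (span_add a b)
  then obtain F1 h1 F2 h2 where 1: "finite F1" "F1 \<subseteq> G" "a = (\<Sum>g\<in>F1. h1 g * g)"
    and 2: "finite F2" "F2 \<subseteq> G" "b = (\<Sum>g\<in>F2. h2 g * g)" by blast
  let ?h = "\<lambda>g. (if g \<in> F1 then h1 g else 0) + (if g \<in> F2 then h2 g else 0)"
  have "?h g * g = (if g \<in> F1 then h1 g * g else 0) + (if g \<in> F2 then h2 g * g else 0)" for g
    by (auto simp: distrib_right)
  then have "(\<Sum>g\<in>F1 \<union> F2. ?h g * g)
      = (\<Sum>g\<in>F1 \<union> F2. if g \<in> F1 then h1 g * g else 0) + (\<Sum>g\<in>F1 \<union> F2. if g \<in> F2 then h2 g * g else 0)"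
    by (simp add: sum.distrib)
  also have "\<dots> = a + b"
    using 1 2 by (simp add: sum.If_cases Int_absorb1 Int_absorb2)
  finally show ?case using 1 2 by (intro exI[of _ "F1 \<union> F2"] exI[of _ ?h]) auto
next
  case (span_mult a r)
  then obtain F h where "finite F" "F \<subseteq> G" "a = (\<Sum>g\<in>F. h g * g)" by blast
  then show ?case by (intro exI[of _ F] exI[of _ "\<lambda>g. r * h g"]) (auto simp: sum_distrib_left ac_simps)
qed

text \<open>Coefficients from the full polynomial ring can be moved into \<open>sym_ring p\<close> by
  killing every variable outside \<open>sym_vars p\<close>.\<close>

lemma ideal_span_imp_ideal_gen:
  assumes "x \<in> ideal_span G" "G \<subseteq> sym_ring p" "x \<in> sym_ring p"
  shows "x \<in> ideal_gen p G"
proof -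
  interpret r: comm_ring_hom "restrict_vars (sym_vars p)" by (rule restrict_vars_hom)
  obtain F h where F: "finite F" "F \<subseteq> G" "x = (\<Sum>g\<in>F. h g * g)"
    using ideal_span_finite_sum[OF assms(1)] by blast
  have "x = restrict_vars (sym_vars p) x"
    using assms(3) by (simp add: sym_ring_iff_vars_in restrict_vars_id)
  also have "\<dots> = (\<Sum>g\<in>F. restrict_vars (sym_vars p) (h g) * g)"
    unfolding F(3) r.hom_sum r.hom_mult
    using F(2) assms(2) by (intro sum.cong refl) (auto simp: sym_ring_iff_vars_in restrict_vars_id)
  finally show ?thesis
    unfolding ideal_gen_def using F vars_in_restrict_vars
    by (intro CollectI exI[of _ F] exI[of _ "\<lambda>g. restrict_vars (sym_vars p) (h g)"])
      (auto simp: sym_ring_iff_vars_in)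
qed

locale saturation =
  fixes S :: "mpoly set" and G :: "mpoly set"
  assumes one_mem: "1 \<in> S" and mult_mem: "s \<in> S \<Longrightarrow> t \<in> S \<Longrightarrow> s * t \<in> S"
begin

definition sat_cong :: "mpoly \<Rightarrow> mpoly \<Rightarrow> bool" where
  "sat_cong a b \<longleftrightarrow> (\<exists>s\<in>S. s * (a - b) \<in> ideal_span G)"

lemma sat_cong_refl [simp]: "sat_cong a a"
  unfolding sat_cong_def using one_mem span_zero by auto

lemma sat_congI: "s \<in> S \<Longrightarrow> s * (a - b) \<in> ideal_span G \<Longrightarrow> sat_cong a b"
  unfolding sat_cong_def by blast

lemma sat_cong_span: "a - b \<in> ideal_span G \<Longrightarrow> sat_cong a b"
  using sat_congI[OF one_mem] by simp

lemma sat_cong_trans: "sat_cong a b \<Longrightarrow> sat_cong b c \<Longrightarrow> sat_cong a c"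
proof -
  assume "sat_cong a b" "sat_cong b c"
  then obtain s t where st: "s \<in> S" "t \<in> S" "s * (a - b) \<in> ideal_span G" "t * (b - c) \<in> ideal_span G"
    unfolding sat_cong_def by blast
  have "(s * t) * (a - c) = t * (s * (a - b)) + s * (t * (b - c))" by (simp add: algebra_simps)
  then show "sat_cong a c" unfolding sat_cong_def using st mult_mem by (metis span_add span_mult)
qed

lemma sat_cong_add: "sat_cong a b \<Longrightarrow> sat_cong c d \<Longrightarrow> sat_cong (a + c) (b + d)"
proof -
  assume "sat_cong a b" "sat_cong c d"
  then obtain s t where st: "s \<in> S" "t \<in> S" "s * (a - b) \<in> ideal_span G" "t * (c - d) \<in> ideal_span G"
    unfolding sat_cong_def by blast
  have "(s * t) * ((a + c) - (b + d)) = t * (s * (a - b)) + s * (t * (c - d))" by (simp add: algebra_simps)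
  then show ?thesis unfolding sat_cong_def using st mult_mem by (metis span_add span_mult)
qed

lemma sat_cong_mult_left: "sat_cong a b \<Longrightarrow> sat_cong (c * a) (c * b)"
  unfolding sat_cong_def by (metis span_mult mult.left_commute right_diff_distrib)

lemma sat_cong_mult: "sat_cong a b \<Longrightarrow> sat_cong c d \<Longrightarrow> sat_cong (a * c) (b * d)"
  using sat_cong_mult_left[of a b c] sat_cong_mult_left[of c d b] sat_cong_trans[of "a * c" "b * c" "b * d"]
  by (simp add: ac_simps)

lemma sat_cong_sum: "(\<And>x. x \<in> A \<Longrightarrow> sat_cong (F x) (H x)) \<Longrightarrow> sat_cong (sum F A) (sum H A)"
  by (induction A rule: infinite_finite_induct) (auto intro: sat_cong_add)

lemma sat_cong_prod: "(\<And>x. x \<in> A \<Longrightarrow> sat_cong (F x) (H x)) \<Longrightarrow> sat_cong (prod F A) (prod H A)"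
  by (induction A rule: infinite_finite_induct) (auto intro: sat_cong_mult)

lemma sat_cong_power: "sat_cong a b \<Longrightarrow> sat_cong (a ^ n) (b ^ n)"
  by (induction n) (auto intro: sat_cong_mult)

lemma sat_cong_monom_val:
  "(\<And>v. v \<in> Poly_Mapping.keys m \<Longrightarrow> sat_cong (x v) (y v)) \<Longrightarrow> sat_cong (monom_val x m) (monom_val y m)"
  unfolding monom_val_def by (intro sat_cong_prod sat_cong_power) auto

end

section \<open>Minors of matrices given by their entries\<close>

definition submat_fun :: "(nat \<Rightarrow> nat \<Rightarrow> 'a) \<Rightarrow> nat list \<Rightarrow> nat list \<Rightarrow> 'a mat" where
  "submat_fun M rs cs = mat (length rs) (length cs) (\<lambda>(a, b). M (rs ! a) (cs ! b))"

lemma submat_fun_carrier[simp]: "submat_fun M rs cs \<in> carrier_mat (length rs) (length cs)"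
  by (simp add: submat_fun_def)

lemma submat_fun_dims[simp]: "dim_row (submat_fun M rs cs) = length rs" "dim_col (submat_fun M rs cs) = length cs"
  by (simp_all add: submat_fun_def)

lemma submat_fun_index[simp]: "a < length rs \<Longrightarrow> b < length cs \<Longrightarrow> submat_fun M rs cs $$ (a, b) = M (rs ! a) (cs ! b)"
  by (simp add: submat_fun_def)

lemma map_submat_fun: "map_mat h (submat_fun M rs cs) = submat_fun (\<lambda>a b. h (M a b)) rs cs"
  by (rule eq_matI) auto

definition drop_nth :: "nat \<Rightarrow> 'b list \<Rightarrow> 'b list" where
  "drop_nth t ks = take t ks @ drop (Suc t) ks"

lemma length_drop_nth: "t < length ks \<Longrightarrow> length (drop_nth t ks) = length ks - 1"
  by (simp add: drop_nth_def)

lemma nth_drop_nth: "t < length ks \<Longrightarrow> c < length ks - 1 \<Longrightarrow> drop_nth t ks ! c = (if c < t then ks ! c else ks ! Suc c)"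
  by (auto simp: drop_nth_def nth_append)

lemma submat_fun_row_front:
  assumes t: "t < length ks"
  shows "submat_fun M (ks ! t # drop_nth t ks) cs = swap_row_to_front (submat_fun M ks cs) t"
  apply (subst swap_row_to_front_result[OF submat_fun_carrier t])
  apply (rule eq_matI)
  using t by (auto simp: length_drop_nth submat_fun_def nth_drop_nth)

lemma det_submat_fun_row_front:
  assumes t: "t < length ks" and l: "length cs = length ks"
  shows "det (submat_fun M (ks ! t # drop_nth t ks) cs) = (-1) ^ t * det (submat_fun M ks cs)"
proof -
  have "submat_fun M ks cs \<in> carrier_mat (length ks) (length ks)" using l submat_fun_carrier[of M ks cs] by simp
  then show ?thesis unfolding submat_fun_row_front[OF t] using swap_row_to_front_det t by blast
qed

lemma det_submat_fun_bordered:
  fixes M :: "nat \<Rightarrow> nat \<Rightarrow> 'a::comm_ring_1"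
  shows "det (submat_fun M (i # ks) (j # ks)) = M i j * det (submat_fun M ks ks)
    - (\<Sum>t<length ks. M i (ks ! t) * det (submat_fun M (ks ! t # drop_nth t ks) (j # drop_nth t ks)))"
proof -
  let ?n = "length ks"
  let ?A = "submat_fun M (i # ks) (j # ks)"
  have A: "?A \<in> carrier_mat (Suc ?n) (Suc ?n)" using submat_fun_carrier[of M "i # ks" "j # ks"] by simp
  have "det ?A = (\<Sum>c<Suc ?n. ?A $$ (0, c) * cofactor ?A 0 c)"
    by (rule laplace_expansion_row[OF A]) simp
  also have "\<dots> = ?A $$ (0, 0) * cofactor ?A 0 0 + (\<Sum>t<?n. ?A $$ (0, Suc t) * cofactor ?A 0 (Suc t))"
    by (rule sum.lessThan_Suc_shift)
  also have "?A $$ (0, 0) * cofactor ?A 0 0 = M i j * det (submat_fun M ks ks)"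
  proof -
    have "mat_delete ?A 0 0 = submat_fun M ks ks" by (rule eq_matI) (auto simp: mat_delete_def)
    then show ?thesis by (simp add: cofactor_def)
  qed
  also have "(\<Sum>t<?n. ?A $$ (0, Suc t) * cofactor ?A 0 (Suc t)) =
     (\<Sum>t<?n. - (M i (ks ! t) * det (submat_fun M (ks ! t # drop_nth t ks) (j # drop_nth t ks))))"
  proof (rule sum.cong[OF refl])
    fix t assume "t \<in> {..<?n}"
    then have t: "t < ?n" by simp
    have md: "mat_delete ?A 0 (Suc t) = submat_fun M ks (j # drop_nth t ks)"
      by (rule eq_matI) (insert t, auto simp: mat_delete_def length_drop_nth nth_drop_nth nth_Cons')
    have l: "length (j # drop_nth t ks) = length ks" using t by (simp add: length_drop_nth)
    have "cofactor ?A 0 (Suc t) = (-1) ^ Suc t * det (submat_fun M ks (j # drop_nth t ks))"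
      by (simp add: cofactor_def md)
    also have "det (submat_fun M ks (j # drop_nth t ks)) = (-1) ^ t * det (submat_fun M (ks ! t # drop_nth t ks) (j # drop_nth t ks))"
      using det_submat_fun_row_front[OF t l, of M] by (simp add: power_mult_distrib[symmetric] mult.assoc[symmetric] power_add[symmetric])
    finally have "cofactor ?A 0 (Suc t) = - det (submat_fun M (ks ! t # drop_nth t ks) (j # drop_nth t ks))"
      by (simp add: power_add[symmetric] mult.assoc[symmetric])
    then show "?A $$ (0, Suc t) * cofactor ?A 0 (Suc t) = - (M i (ks ! t) * det (submat_fun M (ks ! t # drop_nth t ks) (j # drop_nth t ks)))"
      using t by simp
  qed
  finally show ?thesis by (simp add: sum_negf)
qed

lemma submat_fun_row_front_last:
  "submat_fun M (m # ks) cs = swap_row_to_front (submat_fun M (ks @ [m]) cs) (length ks)"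
  apply (subst swap_row_to_front_result[OF submat_fun_carrier])
   apply simp
  apply (rule eq_matI)
  by (auto simp: submat_fun_def nth_append)

lemma submat_fun_col_front_last:
  "submat_fun M rs (m # ks) = swap_col_to_front (submat_fun M rs (ks @ [m])) (length ks)"
  apply (subst swap_col_to_front_result[OF submat_fun_carrier])
   apply simp
  apply (rule eq_matI)
  by (auto simp: submat_fun_def nth_append)

lemma det_submat_fun_snoc:
  fixes M :: "nat \<Rightarrow> nat \<Rightarrow> 'a::comm_ring_1"
  shows "det (submat_fun M (ks @ [m]) (ks @ [m])) = det (submat_fun M (m # ks) (m # ks))"
proof -
  let ?n = "length ks"
  have c1: "submat_fun M (ks @ [m]) (ks @ [m]) \<in> carrier_mat (Suc ?n) (Suc ?n)"
    using submat_fun_carrier[of M "ks @ [m]" "ks @ [m]"] by simp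
  have c2: "submat_fun M (m # ks) (ks @ [m]) \<in> carrier_mat (Suc ?n) (Suc ?n)"
    using submat_fun_carrier[of M "m # ks" "ks @ [m]"] by simp
  have "det (submat_fun M (m # ks) (m # ks)) = (-1) ^ ?n * det (submat_fun M (m # ks) (ks @ [m]))"
    unfolding submat_fun_col_front_last[of M "m # ks"] by (rule swap_col_to_front_det[OF c2]) simp
  also have "det (submat_fun M (m # ks) (ks @ [m])) = (-1) ^ ?n * det (submat_fun M (ks @ [m]) (ks @ [m]))"
    unfolding submat_fun_row_front_last[of M m ks] by (rule swap_row_to_front_det[OF c1]) simp
  finally show ?thesis by (simp add: mult.assoc[symmetric] power_add[symmetric])
qed

lemma det_submat_fun_repeated_row:
  fixes M :: "nat \<Rightarrow> nat \<Rightarrow> 'a::comm_ring_1"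
  assumes "i \<in> set ks" "length cs = Suc (length ks)"
  shows "det (submat_fun M (i # ks) cs) = 0"
proof -
  obtain t where t: "t < length ks" "ks ! t = i" using assms(1) by (auto simp: in_set_conv_nth)
  have c: "submat_fun M (i # ks) cs \<in> carrier_mat (Suc (length ks)) (Suc (length ks))"
    using submat_fun_carrier[of M "i # ks" cs] assms(2) by simp
  show ?thesis
    by (rule det_identical_rows[OF c, of 0 "Suc t"]) (use t assms(2) in \<open>auto intro!: eq_vecI\<close>)
qed

lemma remove1_nth: "distinct xs \<Longrightarrow> t < length xs \<Longrightarrow> remove1 (xs ! t) xs = drop_nth t xs"
proof (induction xs arbitrary: t)
  case (Cons x xs)
  show ?case
  proof (cases t)
    case 0 then show ?thesis by (simp add: drop_nth_def)
  next
    case (Suc t')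
    then have "xs ! t' \<noteq> x" using Cons.prems by (auto simp: nth_mem)
    then show ?thesis using Cons Suc by (auto simp: drop_nth_def)
  qed
qed simp

definition pminor_of :: "(nat \<Rightarrow> nat \<Rightarrow> 'a::comm_ring_1) \<Rightarrow> nat set \<Rightarrow> 'a" where
  "pminor_of M K = det (submat_fun M (sorted_list_of_set K) (sorted_list_of_set K))"

definition cminor_of :: "(nat \<Rightarrow> nat \<Rightarrow> 'a::comm_ring_1) \<Rightarrow> nat \<Rightarrow> nat \<Rightarrow> nat set \<Rightarrow> 'a" where
  "cminor_of M i j K = det (submat_fun M (i # sorted_list_of_set K) (j # sorted_list_of_set K))"

lemma pminor_eq_pminor_of: "pminor K = pminor_of sigma K"
  unfolding pminor_def pminor_of_def submat_sym_def submat_fun_def ..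

lemma cminor_eq_cminor_of: "cminor i j K = cminor_of sigma i j K"
  unfolding cminor_def cminor_of_def submat_sym_def submat_fun_def ..

lemma hom_pminor_of: "comm_ring_hom h \<Longrightarrow> h (pminor_of M K) = pminor_of (\<lambda>a b. h (M a b)) K"
  unfolding pminor_of_def by (simp add: comm_ring_hom.hom_det[of h, symmetric] map_submat_fun)

lemma hom_cminor_of: "comm_ring_hom h \<Longrightarrow> h (cminor_of M i j K) = cminor_of (\<lambda>a b. h (M a b)) i j K"
  unfolding cminor_of_def by (simp add: comm_ring_hom.hom_det[of h, symmetric] map_submat_fun)

lemma pminor_of_empty [simp]: "pminor_of M {} = 1"
  unfolding pminor_of_def by (simp add: submat_fun_def)

lemma cminor_of_expand:
  fixes M :: "nat \<Rightarrow> nat \<Rightarrow> 'a::comm_ring_1"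
  assumes K: "finite K"
  shows "cminor_of M i j K = M i j * pminor_of M K - (\<Sum>k\<in>K. M i k * cminor_of M k j (K - {k}))"
proof -
  let ?ks = "sorted_list_of_set K"
  have d: "distinct ?ks" by simp
  have "(\<Sum>t<length ?ks. M i (?ks ! t) * det (submat_fun M (?ks ! t # drop_nth t ?ks) (j # drop_nth t ?ks)))
      = (\<Sum>t<length ?ks. (\<lambda>k. M i k * cminor_of M k j (K - {k})) (?ks ! t))"
  proof (rule sum.cong[OF refl])
    fix t assume "t \<in> {..<length ?ks}"
    then have t: "t < length ?ks" by simp
    have "sorted_list_of_set (K - {?ks ! t}) = drop_nth t ?ks"
      using sorted_list_of_set_remove[OF K] remove1_nth[OF d t] by simp
    then show "M i (?ks ! t) * det (submat_fun M (?ks ! t # drop_nth t ?ks) (j # drop_nth t ?ks)) =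
      (\<lambda>k. M i k * cminor_of M k j (K - {k})) (?ks ! t)" unfolding cminor_of_def by simp
  qed
  also have "\<dots> = (\<Sum>k\<in>K. M i k * cminor_of M k j (K - {k}))"
    by (rule sum.reindex_bij_betw[OF bij_betw_nth[OF d refl]]) (simp add: K)
  finally have calc: "(\<Sum>t<length ?ks. M i (?ks ! t) * det (submat_fun M (?ks ! t # drop_nth t ?ks) (j # drop_nth t ?ks)))
      = (\<Sum>k\<in>K. M i k * cminor_of M k j (K - {k}))" .
  have L: "cminor_of M i j K = M i j * pminor_of M K - (\<Sum>t<length ?ks. M i (?ks ! t) * det (submat_fun M (?ks ! t # drop_nth t ?ks) (j # drop_nth t ?ks)))"
    unfolding cminor_of_def pminor_of_def by (rule det_submat_fun_bordered)
  show ?thesis unfolding L calc ..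
qed

lemma sorted_list_of_set_insert_max:
  assumes "finite K" "\<forall>k\<in>K. k < m"
  shows "sorted_list_of_set (insert m K) = sorted_list_of_set K @ [m]"
proof -
  have "m \<notin> K" using assms by auto
  then have "sorted_list_of_set (insert m K) = insort m (sorted_list_of_set K)"
    using assms(1) by (simp add: sorted_list_of_set_insert)
  also have "\<dots> = sorted_list_of_set K @ [m]"
    by (rule sorted_insort_is_snoc) (use assms in \<open>auto simp: less_imp_le\<close>)
  finally show ?thesis .
qed

lemma pminor_of_insert_max:
  assumes "finite K" "\<forall>k\<in>K. k < m"
  shows "pminor_of M (insert m K) = cminor_of M m m K"
  unfolding pminor_of_def cminor_of_def sorted_list_of_set_insert_max[OF assms]
  by (rule det_submat_fun_snoc)

lemma cminor_of_row_in:
  fixes M :: "nat \<Rightarrow> nat \<Rightarrow> 'a::comm_ring_1"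
  assumes "finite K" "i \<in> K"
  shows "cminor_of M i j K = 0"
  unfolding cminor_of_def by (rule det_submat_fun_repeated_row) (use assms in auto)

lemma cminor_of_cramer:
  fixes M :: "nat \<Rightarrow> nat \<Rightarrow> 'a::comm_ring_1"
  assumes "finite K" "i \<in> K"
  shows "(\<Sum>k\<in>K. M i k * cminor_of M k j (K - {k})) = M i j * pminor_of M K"
  using cminor_of_expand[OF assms(1), of M i j] cminor_of_row_in[OF assms, of M j] by simp

lemma vars_in_pminor:
  assumes "K \<subseteq> {..<p}"
  shows "vars_in (sym_vars p) (pminor K)"
proof -
  have "set (sorted_list_of_set K) \<subseteq> {..<p}"
    using assms finite_subset[OF assms] by simp
  then have ks: "sorted_list_of_set K ! a < p" if "a < length (sorted_list_of_set K)" for a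
    using nth_mem[OF that] by blast
  show ?thesis unfolding pminor_def submat_sym_def
    by (rule vars_in_det) (auto intro!: vars_in_sigma ks)
qed

lemma vars_in_cminor:
  assumes "K \<subseteq> {..<p}" "i < p" "j < p"
  shows "vars_in (sym_vars p) (cminor i j K)"
proof -
  have "set (sorted_list_of_set K) \<subseteq> {..<p}"
    using assms(1) finite_subset[OF assms(1)] by simp
  then have ks: "(a # sorted_list_of_set K) ! c < p" if "a < p" "c < length (a # sorted_list_of_set K)" for a c
    using that nth_mem[OF that(2)] by auto
  show ?thesis unfolding cminor_def submat_sym_def
    by (rule vars_in_det) (auto intro!: vars_in_sigma ks assms(2,3))
qed

section \<open>Square matrices given by their entries\<close>

definition fmult :: "nat \<Rightarrow> (nat \<Rightarrow> nat \<Rightarrow> 'a::comm_ring_1) \<Rightarrow> (nat \<Rightarrow> nat \<Rightarrow> 'a) \<Rightarrow> nat \<Rightarrow> nat \<Rightarrow> 'a" where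
  "fmult p A B i j = (\<Sum>k<p. A i k * B k j)"

definition fone :: "nat \<Rightarrow> nat \<Rightarrow> 'a::comm_ring_1" where
  "fone i j = (if i = j then 1 else 0)"

definition ftrans :: "(nat \<Rightarrow> nat \<Rightarrow> 'a) \<Rightarrow> nat \<Rightarrow> nat \<Rightarrow> 'a" where
  "ftrans A i j = A j i"

fun fpow :: "nat \<Rightarrow> (nat \<Rightarrow> nat \<Rightarrow> 'a::comm_ring_1) \<Rightarrow> nat \<Rightarrow> nat \<Rightarrow> nat \<Rightarrow> 'a" where
  "fpow p A 0 = fone"
| "fpow p A (Suc n) = fmult p A (fpow p A n)"

definition strict_upper :: "(nat \<Rightarrow> nat \<Rightarrow> 'a::zero) \<Rightarrow> bool" where
  "strict_upper A \<longleftrightarrow> (\<forall>i j. j \<le> i \<longrightarrow> A i j = 0)"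

lemma fmult_assoc: "fmult p (fmult p A B) C = fmult p A (fmult p B C)"
  unfolding fmult_def
  by (intro ext) (simp add: sum_distrib_left sum_distrib_right mult.assoc, rule sum.swap)

lemma ftrans_fmult: "ftrans (fmult p A B) = fmult p (ftrans B) (ftrans A)"
  unfolding fmult_def ftrans_def by (intro ext) (simp add: mult.commute)

lemma ftrans_ftrans [simp]: "ftrans (ftrans A) = A"
  unfolding ftrans_def by simp

lemma fmult_cong:
  assumes "\<And>k. k < p \<Longrightarrow> A i k = A' i k" "\<And>k. k < p \<Longrightarrow> B k j = B' k j"
  shows "fmult p A B i j = fmult p A' B' i j"
  unfolding fmult_def using assms by (intro sum.cong) auto

lemma fmult_scalar_left: "i < p \<Longrightarrow> fmult p (\<lambda>k l. c * fone k l) A i j = c * A i j"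
proof -
  assume i: "i < p"
  have "fmult p (\<lambda>k l. c * fone k l) A i j = (\<Sum>k<p. if k = i then c * A i j else 0)"
    unfolding fmult_def fone_def by (rule sum.cong) auto
  then show ?thesis using i by simp
qed

lemma fmult_scalar_right: "j < p \<Longrightarrow> fmult p A (\<lambda>k l. c * fone k l) i j = c * A i j"
proof -
  assume j: "j < p"
  have "fmult p A (\<lambda>k l. c * fone k l) i j = (\<Sum>k<p. if k = j then c * A i j else 0)"
    unfolding fmult_def fone_def by (rule sum.cong) auto
  then show ?thesis using j by simp
qed

lemma fmult_fone_left: "i < p \<Longrightarrow> fmult p fone A i j = A i j"
  using fmult_scalar_left[of i p 1 A j] by simp

lemma fmult_fone_right: "j < p \<Longrightarrow> fmult p A fone i j = A i j"
  using fmult_scalar_right[of j p A 1 i] by simp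

lemma ftrans_scalar: "ftrans (\<lambda>k l. c * fone k l) = (\<lambda>k l. c * fone k l)"
  unfolding ftrans_def fone_def by (intro ext) auto

lemma fpow_Suc_right: "i < p \<Longrightarrow> j < p \<Longrightarrow> fmult p (fpow p A n) A i j = fpow p A (Suc n) i j"
proof (induction n arbitrary: i j)
  case 0
  then show ?case by (simp add: fmult_fone_left fmult_fone_right)
next
  case (Suc n)
  have "fmult p (fpow p A (Suc n)) A i j = fmult p A (fmult p (fpow p A n) A) i j"
    by (simp add: fmult_assoc)
  also have "\<dots> = fmult p A (fpow p A (Suc n)) i j"
    using Suc by (intro fmult_cong) auto
  finally show ?case by simp
qed

lemma fpow_strict_upper_eq_zero:
  assumes "strict_upper A" "i < p" "j < p" "j < i + n \<or> (n = 0 \<and> j \<noteq> i)"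
  shows "fpow p A n i j = 0"
  using assms(2-)
proof (induction n arbitrary: i j)
  case 0 then show ?case by (auto simp: fone_def)
next
  case (Suc n)
  have "A i k * fpow p A n k j = 0" if "k < p" for k
  proof (cases "k \<le> i")
    case True then show ?thesis using assms(1) by (simp add: strict_upper_def)
  next
    case False
    then have "j < k + n \<or> (n = 0 \<and> j \<noteq> k)" using Suc.prems by auto
    then show ?thesis using Suc.IH[of k j] that Suc.prems by auto
  qed
  then show ?case by (simp add: fmult_def)
qed

lemma fpow_nilpotent: "strict_upper A \<Longrightarrow> i < p \<Longrightarrow> j < p \<Longrightarrow> fpow p A p i j = 0"
  by (rule fpow_strict_upper_eq_zero) auto

definition neumann_inv :: "nat \<Rightarrow> 'a::comm_ring_1 \<Rightarrow> (nat \<Rightarrow> nat \<Rightarrow> 'a) \<Rightarrow> nat \<Rightarrow> nat \<Rightarrow> 'a" where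
  "neumann_inv p c A i j = (\<Sum>k<p. c ^ (p - Suc k) * fpow p A k i j)"

text \<open>For nilpotent \<open>A\<close>, \<open>neumann_inv p c A\<close> is \<open>c ^ p * (c * 1 - A)\<^sup>-\<^sup>1\<close>, written without division.\<close>

lemma neumann_inv_right:
  assumes "strict_upper A" "i < p" "j < p"
  shows "fmult p (\<lambda>i j. c * fone i j - A i j) (neumann_inv p c A) i j = c ^ p * fone i j"
proof -
  let ?f = "\<lambda>k. c ^ (p - k) * fpow p A k i j"
  have "fmult p (\<lambda>i j. c * fone i j - A i j) (neumann_inv p c A) i j
      = c * fmult p fone (neumann_inv p c A) i j - fmult p A (neumann_inv p c A) i j"
    unfolding fmult_def by (simp add: left_diff_distrib sum_subtractf sum_distrib_left mult.assoc)
  also have "c * fmult p fone (neumann_inv p c A) i j = (\<Sum>k<p. ?f k)"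
    unfolding fmult_fone_left[OF assms(2)] neumann_inv_def sum_distrib_left
    by (intro sum.cong refl) (auto simp: mult.assoc[symmetric] power_Suc[symmetric] Suc_diff_Suc)
  also have "fmult p A (neumann_inv p c A) i j = (\<Sum>k<p. ?f (Suc k))"
    unfolding fmult_def neumann_inv_def
    by (simp add: sum_distrib_left, subst sum.swap) (simp add: fmult_def sum_distrib_left ac_simps)
  also have "(\<Sum>k<p. ?f k) - (\<Sum>k<p. ?f (Suc k)) = ?f 0 - ?f p"
    by (subst sum_subtractf[symmetric], rule sum_lessThan_telescope')
  also have "\<dots> = c ^ p * fone i j"
    using fpow_nilpotent[OF assms] by simp
  finally show ?thesis .
qed

lemma neumann_inv_left:
  assumes "strict_upper A" "i < p" "j < p"
  shows "fmult p (neumann_inv p c A) (\<lambda>i j. c * fone i j - A i j) i j = c ^ p * fone i j"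
proof -
  let ?f = "\<lambda>k. c ^ (p - k) * fpow p A k i j"
  have "fmult p (neumann_inv p c A) (\<lambda>i j. c * fone i j - A i j) i j
      = c * fmult p (neumann_inv p c A) fone i j - fmult p (neumann_inv p c A) A i j"
    unfolding fmult_def by (simp add: right_diff_distrib sum_subtractf sum_distrib_left ac_simps)
  also have "c * fmult p (neumann_inv p c A) fone i j = (\<Sum>k<p. ?f k)"
    unfolding fmult_fone_right[OF assms(3)] neumann_inv_def sum_distrib_left
    by (intro sum.cong refl) (auto simp: mult.assoc[symmetric] power_Suc[symmetric] Suc_diff_Suc)
  also have "fmult p (neumann_inv p c A) A i j = (\<Sum>k<p. c ^ (p - Suc k) * fmult p (fpow p A k) A i j)"
    unfolding fmult_def neumann_inv_def
    by (simp add: sum_distrib_right sum_distrib_left mult.assoc, rule sum.swap)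
  also have "\<dots> = (\<Sum>k<p. ?f (Suc k))"
    by (simp only: fpow_Suc_right[OF assms(2,3)])
  also have "(\<Sum>k<p. ?f k) - (\<Sum>k<p. ?f (Suc k)) = ?f 0 - ?f p"
    by (subst sum_subtractf[symmetric], rule sum_lessThan_telescope')
  also have "\<dots> = c ^ p * fone i j"
    using fpow_nilpotent[OF assms] by simp
  finally show ?thesis .
qed

lemma neumann_inv_below:
  assumes "strict_upper A" "i < p" "j < p" "j < i"
  shows "neumann_inv p c A i j = 0"
  unfolding neumann_inv_def using fpow_strict_upper_eq_zero[OF assms(1-3)] assms(4)
  by (intro sum.neutral) auto

lemma neumann_inv_diag:
  assumes "strict_upper A" "i < p"
  shows "neumann_inv p (1::'a::comm_ring_1) A i i = 1"
proof -
  have "neumann_inv p 1 A i i = (\<Sum>k<p. if k = 0 then 1 else 0)"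
    unfolding neumann_inv_def
    by (intro sum.cong refl) (auto simp: fone_def intro!: fpow_strict_upper_eq_zero[OF assms assms(2)])
  then show ?thesis using assms(2) by simp
qed

lemma hom_fpow:
  assumes "comm_ring_hom h"
  shows "h (fpow p A n i j) = fpow p (\<lambda>i j. h (A i j)) n i j"
proof -
  interpret comm_ring_hom h by fact
  show ?thesis
    by (induction n arbitrary: i j) (simp_all add: fone_def fmult_def hom_sum hom_mult)
qed

lemma hom_neumann_inv:
  assumes "comm_ring_hom h"
  shows "h (neumann_inv p c A i j) = neumann_inv p (h c) (\<lambda>i j. h (A i j)) i j"
proof -
  interpret comm_ring_hom h by fact
  show ?thesis unfolding neumann_inv_def by (simp add: hom_sum hom_mult hom_power hom_fpow[OF assms])
qed

lemma fpow_scale: "fpow p (\<lambda>i j. c * A i j) n i j = c ^ n * fpow p A n i j"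
  by (induction n arbitrary: i j) (simp_all add: fmult_def sum_distrib_left ac_simps)

lemma neumann_inv_scale:
  "neumann_inv p c (\<lambda>i j. c * A i j) i j = c ^ (p - 1) * neumann_inv p 1 A i j"
  unfolding neumann_inv_def fpow_scale sum_distrib_left
proof (intro sum.cong refl)
  fix k assume "k \<in> {..<p}"
  then have "p - Suc k + k = p - 1" by simp
  then show "c ^ (p - Suc k) * (c ^ k * fpow p A k i j) = c ^ (p - 1) * (1 ^ (p - Suc k) * fpow p A k i j)"
    by (metis (no_types) mult.assoc power_add power_one mult_1)
qed

lemma vars_in_fpow: "(\<And>i j. vars_in V (A i j)) \<Longrightarrow> vars_in V (fpow p A n i j)"
  by (induction n arbitrary: i j) (auto simp: fone_def fmult_def intro!: vars_in_sum vars_in_mult)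

lemma vars_in_neumann_inv:
  "vars_in V c \<Longrightarrow> (\<And>i j. vars_in V (A i j)) \<Longrightarrow> vars_in V (neumann_inv p c A i j)"
  unfolding neumann_inv_def by (intro vars_in_sum vars_in_mult vars_in_power vars_in_fpow)

context saturation
begin

lemma sat_cong_fmult:
  assumes "\<And>k. k < p \<Longrightarrow> sat_cong (A i k) (A' i k)" "\<And>k. k < p \<Longrightarrow> sat_cong (B k j) (B' k j)"
  shows "sat_cong (fmult p A B i j) (fmult p A' B' i j)"
  unfolding fmult_def using assms by (intro sat_cong_sum sat_cong_mult) auto

lemma sat_cong_neumann_inv:
  assumes "\<And>i j. sat_cong (A i j) (A' i j)"
  shows "sat_cong (neumann_inv p c A i j) (neumann_inv p c A' i j)"
proof -
  have "sat_cong (fpow p A n i j) (fpow p A' n i j)" for n i j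
    by (induction n arbitrary: i j) (auto intro!: sat_cong_fmult assms)
  then show ?thesis unfolding neumann_inv_def by (intro sat_cong_sum sat_cong_mult sat_cong_refl)
qed

end

definition gram :: "nat \<Rightarrow> (nat \<Rightarrow> nat \<Rightarrow> 'a::comm_ring_1) \<Rightarrow> (nat \<Rightarrow> 'a) \<Rightarrow> nat \<Rightarrow> nat \<Rightarrow> 'a" where
  "gram p B w i j = (\<Sum>k<p. B k i * w k * B k j)"

lemma gram_commute: "gram p B w i j = gram p B w j i"
  unfolding gram_def by (simp add: ac_simps)

lemma hom_gram:
  assumes "comm_ring_hom h"
  shows "h (gram p B w i j) = gram p (\<lambda>a b. h (B a b)) (\<lambda>k. h (w k)) i j"
proof -
  interpret comm_ring_hom h by fact
  show ?thesis unfolding gram_def by (simp add: hom_sum hom_mult)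
qed

lemma gram_scale: "gram p (\<lambda>a b. c * B a b) (\<lambda>k. d * w k) i j = c * d * c * gram p B w i j"
  unfolding gram_def sum_distrib_left by (intro sum.cong refl) (simp add: ac_simps)

lemma gram_eq_fmult: "gram p B w = fmult p (ftrans B) (fmult p (\<lambda>k l. w k * fone k l) B)"
proof (intro ext)
  fix i j
  have "fmult p (\<lambda>k l. w k * fone k l) B k j = w k * B k j" if "k < p" for k
  proof -
    have "fmult p (\<lambda>k l. w k * fone k l) B k j = (\<Sum>l<p. if l = k then w k * B k j else 0)"
      unfolding fmult_def fone_def by (rule sum.cong) auto
    then show ?thesis using that by simp
  qed
  then show "gram p B w i j = fmult p (ftrans B) (fmult p (\<lambda>k l. w k * fone k l) B) i j"
    unfolding gram_def fmult_def[of p "ftrans B"] ftrans_def by (intro sum.cong refl) (simp add: ac_simps)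
qed

section \<open>Positive definite forms\<close>

definition pos_def :: "nat \<Rightarrow> (nat \<Rightarrow> nat \<Rightarrow> real) \<Rightarrow> bool" where
  "pos_def p s \<longleftrightarrow> (\<forall>x. (\<exists>a<p. x a \<noteq> 0) \<longrightarrow> 0 < (\<Sum>a<p. \<Sum>b<p. x a * s a b * x b))"

lemma pos_def_kernel:
  assumes "pos_def p s" "K \<subseteq> {..<p}" "\<And>i. i \<in> K \<Longrightarrow> (\<Sum>k\<in>K. s i k * z k) = 0" "k0 \<in> K"
  shows "z k0 = 0"
proof (rule ccontr)
  assume nz: "z k0 \<noteq> 0"
  define x where "x a = (if a \<in> K then z a else 0)" for a
  have "\<exists>a<p. x a \<noteq> 0" using nz assms(2,4) unfolding x_def by auto
  then have "0 < (\<Sum>a<p. \<Sum>b<p. x a * s a b * x b)"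
    using assms(1) unfolding pos_def_def by blast
  also have "(\<Sum>a<p. \<Sum>b<p. x a * s a b * x b) = (\<Sum>a<p. x a * (\<Sum>b\<in>K. s a b * z b))"
  proof (rule sum.cong[OF refl])
    fix a
    have "(\<Sum>b<p. x a * s a b * x b) = (\<Sum>b\<in>K. x a * s a b * x b)"
      by (rule sum.mono_neutral_right) (use assms(2) in \<open>auto simp: x_def\<close>)
    also have "\<dots> = x a * (\<Sum>b\<in>K. s a b * z b)"
      by (simp add: x_def sum_distrib_left ac_simps)
    finally show "(\<Sum>b<p. x a * s a b * x b) = x a * (\<Sum>b\<in>K. s a b * z b)" .
  qed
  also have "\<dots> = 0" using assms(3) by (intro sum.neutral) (auto simp: x_def)
  finally show False by simp
qed

text \<open>The Schur complement of a positive definite block is positive: the test vector is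
  \<open>e\<^sub>m - \<Sum>\<^sub>k u\<^sub>k e\<^sub>k\<close> with \<open>u\<close> the Cramer solution of \<open>s\<^sub>K\<^sub>K u = s\<^sub>K\<^sub>m\<close>.\<close>

lemma cminor_of_diag_pos:
  assumes pd: "pos_def p s" and K: "K \<subseteq> {..<p}" and m: "m < p" "m \<notin> K"
    and d: "0 < pminor_of s K"
  shows "0 < cminor_of s m m K"
proof -
  have fK: "finite K" using K finite_subset by blast
  define u where "u k = cminor_of s k m (K - {k}) / pminor_of s K" for k
  define x where "x a = (if a = m then 1 else if a \<in> K then - u a else 0)" for a
  define y where "y a = (\<Sum>b<p. s a b * x b)" for a
  have y: "y a = s a m - (\<Sum>k\<in>K. s a k * u k)" for a
  proof -
    have "y a = (\<Sum>b\<in>insert m K. s a b * x b)"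
      unfolding y_def by (rule sum.mono_neutral_right) (use K m in \<open>auto simp: x_def\<close>)
    also have "\<dots> = s a m * x m + (\<Sum>b\<in>K. s a b * x b)"
      using fK m(2) by simp
    also have "(\<Sum>b\<in>K. s a b * x b) = (\<Sum>k\<in>K. - (s a k * u k))"
      using m(2) by (intro sum.cong refl) (auto simp: x_def)
    finally show ?thesis by (simp add: x_def sum_negf)
  qed
  have sum_u: "(\<Sum>k\<in>K. s a k * u k) = (\<Sum>k\<in>K. s a k * cminor_of s k m (K - {k})) / pminor_of s K" for a
    unfolding u_def by (simp add: sum_divide_distrib)
  have y0: "y i = 0" if "i \<in> K" for i
    unfolding y sum_u cminor_of_cramer[OF fK that] using d by simp
  have "\<exists>a<p. x a \<noteq> 0" using m(1) by (intro exI[of _ m]) (simp add: x_def)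
  then have "0 < (\<Sum>a<p. \<Sum>b<p. x a * s a b * x b)"
    using pd unfolding pos_def_def by blast
  also have "(\<Sum>a<p. \<Sum>b<p. x a * s a b * x b) = (\<Sum>a<p. x a * y a)"
    unfolding y_def by (simp add: sum_distrib_left mult.assoc)
  also have "\<dots> = (\<Sum>a\<in>insert m K. x a * y a)"
    by (rule sum.mono_neutral_right) (use K m in \<open>auto simp: x_def\<close>)
  also have "\<dots> = y m"
    using fK m(2) y0 by (simp add: x_def)
  finally have "0 < y m" .
  moreover have "cminor_of s m m K = pminor_of s K * y m"
    unfolding cminor_of_expand[OF fK] y sum_u using d by (simp add: algebra_simps)
  ultimately show ?thesis using d by simp
qed

lemma pminor_of_pos:
  assumes pd: "pos_def p s" and "K \<subseteq> {..<p}"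
  shows "0 < pminor_of s K"
  using assms(2)
proof (induction "card K" arbitrary: K rule: less_induct)
  case less
  have fK: "finite K" using less.prems finite_subset by blast
  show ?case
  proof (cases "K = {}")
    case False
    define m where "m = Max K"
    have mK: "m \<in> K" and below: "\<forall>k\<in>K - {m}. k < m"
      using False fK Max_ge[OF fK] by (auto simp: m_def order.order_iff_strict)
    have "0 < pminor_of s (K - {m})"
      by (rule less.hyps) (use less.prems card_Diff1_less[OF fK mK] in auto)
    moreover have "K - {m} \<subseteq> {..<p}" "m < p" "m \<notin> K - {m}"
      using less.prems mK by auto
    ultimately have "0 < cminor_of s m m (K - {m})"
      using cminor_of_diag_pos[OF pd] by blast
    moreover have "K = insert m (K - {m})" using mK by auto
    ultimately show ?thesis using pminor_of_insert_max[OF _ below, of s] fK by simp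
  qed simp
qed

lemma pos_def_diag_dominant:
  assumes diag: "\<And>a. a < p \<Longrightarrow> real p + 1 \<le> s a a"
    and off: "\<And>a b. a < p \<Longrightarrow> b < p \<Longrightarrow> a \<noteq> b \<Longrightarrow> \<bar>s a b\<bar> \<le> 1 / (2 * real p + 2)"
  shows "pos_def p s"
  unfolding pos_def_def
proof (intro allI impI)
  fix x :: "nat \<Rightarrow> real" assume "\<exists>a<p. x a \<noteq> 0"
  then obtain a0 where a0: "a0 < p" "x a0 \<noteq> 0" by blast
  define \<epsilon> :: real where "\<epsilon> = 1 / (2 * real p + 2)"
  define T where "T = (\<Sum>a<p. (x a)\<^sup>2)"
  define lb where "lb a b = (if a = b then (real p + 1) * (x a)\<^sup>2 else 0) - \<epsilon> * ((x a)\<^sup>2 + (x b)\<^sup>2)" for a b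
  have "\<epsilon> \<ge> 0" unfolding \<epsilon>_def by simp
  have lb: "lb a b \<le> x a * s a b * x b" if "a < p" "b < p" for a b
  proof (cases "a = b")
    case True
    have "(real p + 1) * (x a)\<^sup>2 \<le> s a a * (x a)\<^sup>2"
      using diag[OF that(1)] by (intro mult_right_mono) auto
    moreover have "0 \<le> \<epsilon> * ((x a)\<^sup>2 + (x a)\<^sup>2)" using \<open>\<epsilon> \<ge> 0\<close> by simp
    ultimately show ?thesis using True unfolding lb_def by (simp add: power2_eq_square ac_simps)
  next
    case False
    have "2 * \<bar>x a\<bar> * \<bar>x b\<bar> \<le> (x a)\<^sup>2 + (x b)\<^sup>2"
      using sum_squares_bound[of "\<bar>x a\<bar>" "\<bar>x b\<bar>"] by simp
    moreover have "0 \<le> \<bar>x a\<bar> * \<bar>x b\<bar>" by simp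
    ultimately have "\<bar>x a\<bar> * \<bar>x b\<bar> \<le> (x a)\<^sup>2 + (x b)\<^sup>2" by linarith
    then have "\<bar>s a b\<bar> * (\<bar>x a\<bar> * \<bar>x b\<bar>) \<le> \<epsilon> * ((x a)\<^sup>2 + (x b)\<^sup>2)"
      using off[OF that False] unfolding \<epsilon>_def by (intro mult_mono) auto
    then have "\<bar>x a * s a b * x b\<bar> \<le> \<epsilon> * ((x a)\<^sup>2 + (x b)\<^sup>2)"
      by (simp add: abs_mult ac_simps)
    then have "- (\<epsilon> * ((x a)\<^sup>2 + (x b)\<^sup>2)) \<le> x a * s a b * x b" by linarith
    then show ?thesis using False unfolding lb_def by simp
  qed
  have "0 < T"
    unfolding T_def using a0 by (intro sum_pos2[of _ a0]) auto
  have "(\<Sum>a<p. \<Sum>b<p. lb a b) = (real p + 1) * T - \<epsilon> * (2 * real p * T)"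
    unfolding lb_def T_def
    by (simp add: sum_subtractf sum.distrib sum_distrib_left[symmetric] algebra_simps)
  also have "\<dots> = T * (real p + 1 - real p / (real p + 1))"
    unfolding \<epsilon>_def by (simp add: field_simps)
  also have "\<dots> > 0"
  proof -
    have "real p / (real p + 1) \<le> real p" by (simp add: field_simps)
    then show ?thesis using \<open>0 < T\<close> by simp
  qed
  finally have "0 < (\<Sum>a<p. \<Sum>b<p. lb a b)" .
  also have "\<dots> \<le> (\<Sum>a<p. \<Sum>b<p. x a * s a b * x b)"
    by (intro sum_mono lb) auto
  finally show "0 < (\<Sum>a<p. \<Sum>b<p. x a * s a b * x b)" .
qed

text \<open>Infinite sets of entries whose symmetric matrices are all diagonally dominant.\<close>

definition dominant_box :: "nat \<Rightarrow> nat \<times> nat \<Rightarrow> real set" where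
  "dominant_box p v = (if fst v = snd v then real ` {p + 1..} else (\<lambda>n. 1 / real n) ` {2 * p + 2..})"

lemma infinite_dominant_box: "infinite (dominant_box p v)"
  unfolding dominant_box_def by (auto simp: finite_image_iff inj_on_def infinite_Ici)

lemma pos_def_dominant_box:
  assumes x: "\<And>v. v \<in> sym_vars p \<Longrightarrow> x v \<in> dominant_box p v"
  shows "pos_def p (\<lambda>a b. x (min a b, max a b))"
proof (rule pos_def_diag_dominant)
  fix a assume "a < p"
  then have "x (a, a) \<in> dominant_box p (a, a)" using x by (simp add: sym_vars_def)
  then show "real p + 1 \<le> x (min a a, max a a)" unfolding dominant_box_def by auto
next
  fix a b assume ab: "a < p" "b < p" "a \<noteq> b"
  then have "x (min a b, max a b) \<in> dominant_box p (min a b, max a b)" "min a b \<noteq> max a b"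
    using x by (auto simp: sym_vars_def min_def max_def)
  then obtain n where "2 * p + 2 \<le> n" "x (min a b, max a b) = 1 / real n"
    unfolding dominant_box_def by auto
  then show "\<bar>x (min a b, max a b)\<bar> \<le> 1 / (2 * real p + 2)"
    by (simp add: frac_le)
qed

lemma quad_form_gram:
  "(\<Sum>a<p. \<Sum>b<p. x a * gram p B w a b * x b) = (\<Sum>k<p. w k * (\<Sum>a<p. B k a * x a)\<^sup>2)"
  unfolding gram_def power2_eq_square sum_distrib_left sum_distrib_right
  by (subst sum.swap, subst (2) sum.swap) (simp add: ac_simps)

lemma pos_def_gram:
  fixes w :: "nat \<Rightarrow> real"
  assumes lam: "strict_upper lam" and w: "\<And>k. k < p \<Longrightarrow> 0 < w k"
  shows "pos_def p (gram p (neumann_inv p 1 lam) w)"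
  unfolding pos_def_def quad_form_gram
proof (intro allI impI)
  fix x :: "nat \<Rightarrow> real" assume "\<exists>a<p. x a \<noteq> 0"
  then obtain a where a: "a < p" "x a \<noteq> 0" by blast
  define y where "y k = (\<Sum>c<p. neumann_inv p 1 lam k c * x c)" for k
  have inv: "(\<Sum>k<p. (1 * fone a k - lam a k) * neumann_inv p 1 lam k c) = fone a c" if "c < p" for c
    using neumann_inv_right[OF lam a(1) that, of 1] by (simp add: fmult_def)
  have "(\<Sum>c<p. fone a c * x c) = (\<Sum>c<p. if c = a then x a else 0)"
    unfolding fone_def by (rule sum.cong) auto
  then have "x a = (\<Sum>c<p. fone a c * x c)" using a(1) by simp
  also have "\<dots> = (\<Sum>c<p. (\<Sum>k<p. (1 * fone a k - lam a k) * neumann_inv p 1 lam k c) * x c)"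
    by (rule sum.cong[OF refl]) (use inv in auto)
  also have "\<dots> = (\<Sum>k<p. (1 * fone a k - lam a k) * y k)"
    unfolding y_def sum_distrib_left sum_distrib_right by (subst sum.swap) (simp add: mult.assoc)
  finally have xa: "x a = (\<Sum>k<p. (1 * fone a k - lam a k) * y k)" .
  obtain k where k: "k < p" "y k \<noteq> 0"
  proof (rule ccontr)
    assume "\<not> thesis"
    then have "\<forall>k<p. y k = 0" using that by blast
    then show False using a(2) unfolding xa by simp
  qed
  have "0 < w k * (y k)\<^sup>2" using w[OF k(1)] k(2) by simp
  then show "0 < (\<Sum>k<p. w k * (\<Sum>a<p. neumann_inv p 1 lam k a * x a)\<^sup>2)"
    unfolding y_def[symmetric] using k(1)
    by (intro sum_pos2[of _ k]) (auto intro!: mult_nonneg_nonneg less_imp_le[OF w])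
qed

lemma gram_neumann_inv_eq:
  fixes w :: "nat \<Rightarrow> 'a::comm_ring_1"
  assumes lam: "strict_upper lam" and ij: "i \<le> j" "j < p"
  shows "gram p (neumann_inv p 1 lam) w i j - (\<Sum>k<p. gram p (neumann_inv p 1 lam) w i k * lam k j)
    = (if i = j then w j else 0)"
proof -
  let ?B = "neumann_inv p 1 lam"
  have inner: "fmult p ?B (\<lambda>l j. 1 * fone l j - lam l j) k j = ?B k j - (\<Sum>l<p. ?B k l * lam l j)" for k
    using fmult_fone_right[OF ij(2), of ?B k] unfolding fmult_def
    by (simp add: right_diff_distrib sum_subtractf)
  have "(\<Sum>l<p. gram p ?B w i l * lam l j) = (\<Sum>l<p. \<Sum>k<p. ?B k i * w k * ?B k l * lam l j)"
    unfolding gram_def by (simp add: sum_distrib_right)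
  also have "\<dots> = (\<Sum>k<p. \<Sum>l<p. ?B k i * w k * ?B k l * lam l j)"
    by (rule sum.swap)
  also have "\<dots> = (\<Sum>k<p. ?B k i * w k * (\<Sum>l<p. ?B k l * lam l j))"
    by (simp add: sum_distrib_left mult.assoc)
  finally have swap: "(\<Sum>l<p. gram p ?B w i l * lam l j) = (\<Sum>k<p. ?B k i * w k * (\<Sum>l<p. ?B k l * lam l j))" .
  have "gram p ?B w i j - (\<Sum>l<p. gram p ?B w i l * lam l j)
      = (\<Sum>k<p. ?B k i * w k * fmult p ?B (\<lambda>l j. 1 * fone l j - lam l j) k j)"
    unfolding swap inner by (simp add: gram_def right_diff_distrib sum_subtractf)
  also have "\<dots> = (\<Sum>k<p. ?B k i * w k * fone k j)"
    using neumann_inv_left[OF lam _ ij(2), of _ 1] by simp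
  also have "\<dots> = (\<Sum>k<p. if k = j then ?B j i * w j else 0)"
    by (rule sum.cong) (auto simp: fone_def)
  also have "\<dots> = ?B j i * w j"
    using ij(2) by simp
  also have "\<dots> = (if i = j then w j else 0)"
    using ij neumann_inv_diag[OF lam] neumann_inv_below[OF lam] by auto
  finally show ?thesis .
qed

lemma cminor_of_cramer_rule:
  assumes pd: "pos_def p s" and K: "K \<subseteq> {..<p}"
    and sol: "\<And>i. i \<in> K \<Longrightarrow> (\<Sum>k\<in>K. s i k * z k) = s i j" and k: "k \<in> K"
  shows "cminor_of s k j (K - {k}) = pminor_of s K * z k"
proof -
  have fK: "finite K" using K finite_subset by blast
  have "cminor_of s k' j (K - {k'}) - pminor_of s K * z k' = 0" if "k' \<in> K" for k'
  proof (rule pos_def_kernel[OF pd K _ that])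
    fix i assume i: "i \<in> K"
    have "(\<Sum>k\<in>K. s i k * (cminor_of s k j (K - {k}) - pminor_of s K * z k))
        = (\<Sum>k\<in>K. s i k * cminor_of s k j (K - {k})) - pminor_of s K * (\<Sum>k\<in>K. s i k * z k)"
      by (simp add: right_diff_distrib sum_subtractf sum_distrib_left ac_simps)
    then show "(\<Sum>k\<in>K. s i k * (cminor_of s k j (K - {k}) - pminor_of s K * z k)) = 0"
      using cminor_of_cramer[OF fK i, of s j] sol[OF i] by simp
  qed
  then show ?thesis using k by simp
qed

lemma cminor_of_cramer_residual:
  assumes pd: "pos_def p s" and K: "K \<subseteq> {..<p}"
    and sol: "\<And>i. i \<in> K \<Longrightarrow> (\<Sum>k\<in>K. s i k * z k) = s i j"
  shows "cminor_of s i j K = pminor_of s K * (s i j - (\<Sum>k\<in>K. s i k * z k))"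
proof -
  have fK: "finite K" using K finite_subset by blast
  have "(\<Sum>k\<in>K. s i k * cminor_of s k j (K - {k})) = pminor_of s K * (\<Sum>k\<in>K. s i k * z k)"
    unfolding sum_distrib_left using cminor_of_cramer_rule[OF pd K sol] by (intro sum.cong refl) simp
  then show ?thesis
    unfolding cminor_of_expand[OF fK] by (simp add: algebra_simps)
qed

section \<open>Evaluating polynomials at matrices\<close>

definition eval_fun :: "(nat \<Rightarrow> nat \<Rightarrow> real) \<Rightarrow> mpoly \<Rightarrow> real" where
  "eval_fun s = poly_subst (\<lambda>c. c) (\<lambda>v. s (fst v) (snd v))"

definition symmetric_fun :: "(nat \<Rightarrow> nat \<Rightarrow> 'a) \<Rightarrow> bool" where
  "symmetric_fun s \<longleftrightarrow> (\<forall>a b. s a b = s b a)"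

lemma eval_fun_hom: "comm_ring_hom (eval_fun s)"
  unfolding eval_fun_def by (rule poly_subst_hom[OF id_comm_ring_hom])

lemma eval_fun_const_poly [simp]: "eval_fun s (const_poly c) = c"
  unfolding eval_fun_def const_poly_def by (simp add: poly_subst_single)

lemma eval_fun_sigma: "symmetric_fun s \<Longrightarrow> eval_fun s (sigma a b) = s a b"
  unfolding eval_fun_def sigma_def symmetric_fun_def
  by (cases "a \<le> b") (auto simp: poly_subst_single monom_val_single[simplified] min_def max_def)

lemma eval_fun_pminor: "symmetric_fun s \<Longrightarrow> eval_fun s (pminor K) = pminor_of s K"
  unfolding pminor_eq_pminor_of hom_pminor_of[OF eval_fun_hom] by (simp add: eval_fun_sigma)

lemma eval_fun_cminor: "symmetric_fun s \<Longrightarrow> eval_fun s (cminor i j K) = cminor_of s i j K"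
  unfolding cminor_eq_cminor_of hom_cminor_of[OF eval_fun_hom] by (simp add: eval_fun_sigma)

lemma eval_fun_ideal_gen:
  assumes "x \<in> ideal_gen q G" "\<And>g. g \<in> G \<Longrightarrow> eval_fun s g = 0"
  shows "eval_fun s x = 0"
proof -
  interpret h: comm_ring_hom "eval_fun s" by (rule eval_fun_hom)
  obtain F c where "finite F" "F \<subseteq> G" "x = (\<Sum>g\<in>F. c g * g)"
    using assms(1) unfolding ideal_gen_def by blast
  then show ?thesis using assms(2) by (auto simp: h.hom_sum h.hom_mult intro!: sum.neutral)
qed

abbreviation mat_of_fun :: "nat \<Rightarrow> (nat \<Rightarrow> nat \<Rightarrow> 'a) \<Rightarrow> 'a mat" where
  "mat_of_fun p A \<equiv> mat p p (\<lambda>(i, j). A i j)"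

lemma eval_poly_mat_of_fun:
  "f \<in> sym_ring p \<Longrightarrow> eval_poly (mat_of_fun p s) f = eval_fun s f"
  unfolding eval_fun_def by (rule eval_poly_sym_ring) auto

lemma mat_of_fun_cong: "(\<And>i j. i < p \<Longrightarrow> j < p \<Longrightarrow> A i j = B i j) \<Longrightarrow> mat_of_fun p A = mat_of_fun p B"
  by (rule eq_matI) auto

lemma mat_of_fun_mult: "mat_of_fun p A * mat_of_fun p B = mat_of_fun p (fmult p A B)"
proof (rule eq_matI)
  fix i j assume "i < dim_row (mat_of_fun p (fmult p A B))" "j < dim_col (mat_of_fun p (fmult p A B))"
  then show "(mat_of_fun p A * mat_of_fun p B) $$ (i, j) = mat_of_fun p (fmult p A B) $$ (i, j)"
    by (simp add: fmult_def scalar_prod_def atLeast0LessThan)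
qed simp_all

lemma one_mat_eq_mat_of_fun: "1\<^sub>m p = mat_of_fun p fone"
  by (rule eq_matI) (auto simp: fone_def)

lemma transpose_mat_of_fun: "transpose_mat (mat_of_fun p A) = mat_of_fun p (ftrans A)"
  by (rule eq_matI) (auto simp: ftrans_def)

lemma mat_of_fun_gram:
  "transpose_mat (mat_of_fun p B) * mat_of_fun p (\<lambda>k l. w k * fone k l) * mat_of_fun p B
    = mat_of_fun p (gram p B w)"
  by (simp only: transpose_mat_of_fun mat_of_fun_mult fmult_assoc gram_eq_fmult)

lemma one_minus_mat_of_fun_inverse:
  assumes "strict_upper A"
  shows "(1\<^sub>m p - mat_of_fun p A) * mat_of_fun p (neumann_inv p 1 A) = 1\<^sub>m p"
proof -
  have inv: "fmult p (\<lambda>i j. fone i j - A i j) (neumann_inv p 1 A) i j = fone i j" if "i < p" "j < p" for i j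
    using neumann_inv_right[OF assms that, of 1] by simp
  have "1\<^sub>m p - mat_of_fun p A = mat_of_fun p (\<lambda>i j. fone i j - A i j)"
    by (rule eq_matI) (auto simp: fone_def)
  then have "(1\<^sub>m p - mat_of_fun p A) * mat_of_fun p (neumann_inv p 1 A)
      = mat_of_fun p (fmult p (\<lambda>i j. fone i j - A i j) (neumann_inv p 1 A))"
    by (simp add: mat_of_fun_mult)
  also have "\<dots> = mat_of_fun p fone"
    by (rule mat_of_fun_cong) (rule inv)
  finally show ?thesis by (simp add: one_mat_eq_mat_of_fun)
qed

text \<open>\<open>homog_subst c D P f\<close> is \<open>c\<^sup>D f(P/c)\<close>, written without division.\<close>

definition homog_subst :: "mpoly \<Rightarrow> nat \<Rightarrow> ((nat \<times> nat) \<Rightarrow> mpoly) \<Rightarrow> mpoly \<Rightarrow> mpoly" where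
  "homog_subst c D P f = (\<Sum>m\<in>Poly_Mapping.keys f.
     const_poly (Poly_Mapping.lookup f m) * (c ^ (D - monom_deg m) * monom_val P m))"

lemma power_split_monom_deg:
  fixes c :: "'a::monoid_mult"
  shows "monom_deg m \<le> D \<Longrightarrow> c ^ D = c ^ (D - monom_deg m) * c ^ monom_deg m"
  using power_add[of c "D - monom_deg m" "monom_deg m"] by simp

lemma (in saturation) sat_cong_homog_subst:
  assumes deg: "\<And>m. m \<in> Poly_Mapping.keys f \<Longrightarrow> monom_deg m \<le> D"
    and P: "\<And>m v. m \<in> Poly_Mapping.keys f \<Longrightarrow> v \<in> Poly_Mapping.keys m \<Longrightarrow> sat_cong (c * pvar v) (P v)"
  shows "sat_cong (c ^ D * f) (homog_subst c D P f)"
proof -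
  have "c ^ D * f = (\<Sum>m\<in>Poly_Mapping.keys f. c ^ D * (const_poly (Poly_Mapping.lookup f m) * monom_val pvar m))"
    by (simp only: sum_distrib_left[symmetric] poly_eq_sum_monoms[symmetric])
  also have "\<dots> = (\<Sum>m\<in>Poly_Mapping.keys f.
      const_poly (Poly_Mapping.lookup f m) * (c ^ (D - monom_deg m) * monom_val (\<lambda>v. c * pvar v) m))"
  proof (rule sum.cong[OF refl])
    fix m assume m: "m \<in> Poly_Mapping.keys f"
    show "c ^ D * (const_poly (Poly_Mapping.lookup f m) * monom_val pvar m)
        = const_poly (Poly_Mapping.lookup f m) * (c ^ (D - monom_deg m) * monom_val (\<lambda>v. c * pvar v) m)"
      unfolding monom_val_scale power_split_monom_deg[OF deg[OF m], of c] by (simp only: ac_simps)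
  qed
  also have "sat_cong \<dots> (homog_subst c D P f)"
    unfolding homog_subst_def using P
    by (intro sat_cong_sum sat_cong_mult sat_cong_refl sat_cong_monom_val) auto
  finally show ?thesis .
qed

lemma vars_in_homog_subst:
  "vars_in V c \<Longrightarrow> (\<And>v. vars_in V (P v)) \<Longrightarrow> vars_in V (homog_subst c D P f)"
  unfolding homog_subst_def
  by (intro vars_in_sum vars_in_mult vars_in_const_poly vars_in_power vars_in_monom_val) auto

lemma eval_fun_homog_subst:
  assumes deg: "\<And>m. m \<in> Poly_Mapping.keys f \<Longrightarrow> monom_deg m \<le> D"
    and P: "\<And>m v. m \<in> Poly_Mapping.keys f \<Longrightarrow> v \<in> Poly_Mapping.keys m \<Longrightarrow> eval_fun s (P v) = eval_fun s c * y v"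
  shows "eval_fun s (homog_subst c D P f) = eval_fun s c ^ D * poly_subst (\<lambda>r. r) y f"
proof -
  interpret h: comm_ring_hom "eval_fun s" by (rule eval_fun_hom)
  have monom: "eval_fun s (monom_val P m) = eval_fun s c ^ monom_deg m * monom_val y m"
    if "m \<in> Poly_Mapping.keys f" for m
    unfolding hom_monom_val[OF eval_fun_hom] monom_val_scale[symmetric]
    using P[OF that] by (intro monom_val_cong) simp
  have "eval_fun s (homog_subst c D P f) = (\<Sum>m\<in>Poly_Mapping.keys f.
      Poly_Mapping.lookup f m * (eval_fun s c ^ (D - monom_deg m) * eval_fun s (monom_val P m)))"
    unfolding homog_subst_def by (simp add: h.hom_sum h.hom_mult h.hom_power)
  also have "\<dots> = (\<Sum>m\<in>Poly_Mapping.keys f. eval_fun s c ^ D * (Poly_Mapping.lookup f m * monom_val y m))"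
  proof (rule sum.cong[OF refl])
    fix m assume m: "m \<in> Poly_Mapping.keys f"
    show "Poly_Mapping.lookup f m * (eval_fun s c ^ (D - monom_deg m) * eval_fun s (monom_val P m))
        = eval_fun s c ^ D * (Poly_Mapping.lookup f m * monom_val y m)"
      unfolding monom[OF m] power_split_monom_deg[OF deg[OF m], of "eval_fun s c"] by (simp only: ac_simps)
  qed
  also have "\<dots> = eval_fun s c ^ D * poly_subst (\<lambda>r. r) y f"
    by (simp add: poly_subst_def sum_distrib_left)
  finally show ?thesis .
qed

section \<open>Coloured DAGs\<close>

locale colored_dag =
  fixes p :: nat and E :: "(nat \<times> nat) set" and cV :: "nat \<Rightarrow> 'c" and cE :: "nat \<times> nat \<Rightarrow> 'c"
  assumes dag: "dag p E"
begin

lemma edge_less: "(i, j) \<in> E \<Longrightarrow> i < j \<and> j < p"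
  using dag unfolding dag_def by auto

lemma pa_less: "k \<in> pa E j \<Longrightarrow> k < j"
  using edge_less unfolding pa_def by auto

lemma pa_subset: "pa E j \<subseteq> {..<p}"
  using edge_less unfolding pa_def by fastforce

lemma finite_pa [simp]: "finite (pa E j)"
  using pa_subset finite_subset by blast

definition admissible :: "(nat \<Rightarrow> nat \<Rightarrow> real) \<Rightarrow> (nat \<Rightarrow> real) \<Rightarrow> bool" where
  "admissible lam om \<longleftrightarrow>
     (\<forall>i j. (i, j) \<notin> E \<longrightarrow> lam i j = 0) \<and>
     (\<forall>i<p. 0 < om i) \<and>
     (\<forall>i<p. \<forall>k<p. cV i = cV k \<longrightarrow> om i = om k) \<and>
     (\<forall>i j k l. (i, j) \<in> E \<longrightarrow> (k, l) \<in> E \<longrightarrow> cE (i, j) = cE (k, l) \<longrightarrow> lam i j = lam k l)"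

lemma admissible_nonedge: "admissible lam om \<Longrightarrow> (i, j) \<notin> E \<Longrightarrow> lam i j = 0"
  unfolding admissible_def by blast

lemma admissible_pos: "admissible lam om \<Longrightarrow> i < p \<Longrightarrow> 0 < om i"
  unfolding admissible_def by blast

lemma admissible_vertex_color:
  "admissible lam om \<Longrightarrow> i < p \<Longrightarrow> k < p \<Longrightarrow> cV i = cV k \<Longrightarrow> om i = om k"
  unfolding admissible_def by blast

lemma admissible_edge_color:
  "admissible lam om \<Longrightarrow> (i, j) \<in> E \<Longrightarrow> (k, l) \<in> E \<Longrightarrow> cE (i, j) = cE (k, l) \<Longrightarrow> lam i j = lam k l"
  unfolding admissible_def by blast

lemma admissible_strict_upper: "admissible lam om \<Longrightarrow> strict_upper lam"
  unfolding strict_upper_def using admissible_nonedge edge_less by fastforce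

text \<open>\<open>cov lam om\<close> is \<open>(I - \<Lambda>)\<^sup>-\<^sup>T \<Omega> (I - \<Lambda>)\<^sup>-\<^sup>1\<close>.\<close>

abbreviation cov :: "(nat \<Rightarrow> nat \<Rightarrow> real) \<Rightarrow> (nat \<Rightarrow> real) \<Rightarrow> nat \<Rightarrow> nat \<Rightarrow> real" where
  "cov lam om \<equiv> gram p (neumann_inv p 1 lam) om"

lemma mat_of_fun_cov_mem_model:
  assumes adm: "admissible lam om"
  shows "mat_of_fun p (cov lam om) \<in> model p E cV cE"
proof -
  define L where "L = mat_of_fun p lam"
  define B where "B = mat_of_fun p (neumann_inv p 1 lam)"
  define D where "D = mat_of_fun p (\<lambda>k l. om k * fone k l)"
  have carrier: "L \<in> carrier_mat p p" "D \<in> carrier_mat p p" "B \<in> carrier_mat p p"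
    by (simp_all add: L_def B_def D_def)
  have inv1: "(1\<^sub>m p - L) * B = 1\<^sub>m p"
    unfolding L_def B_def by (rule one_minus_mat_of_fun_inverse[OF admissible_strict_upper[OF adm]])
  have inv2: "B * (1\<^sub>m p - L) = 1\<^sub>m p"
    by (rule mat_mult_left_right_inverse[OF _ carrier(3) inv1]) (use carrier in \<open>simp add: minus_carrier_mat\<close>)
  have inverts: "inverts_mat (1\<^sub>m p - L) B" "inverts_mat B (1\<^sub>m p - L)"
    unfolding inverts_mat_def using inv1 inv2 carrier by simp_all
  have S: "mat_of_fun p (cov lam om) = transpose_mat B * D * B"
    using mat_of_fun_gram[of p "neumann_inv p 1 lam" om] by (simp only: B_def D_def)
  have D: "\<forall>i<p. \<forall>j<p. i \<noteq> j \<longrightarrow> D $$ (i, j) = 0" "\<forall>i<p. 0 < D $$ (i, i)"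
    "\<forall>i<p. \<forall>k<p. cV i = cV k \<longrightarrow> D $$ (i, i) = D $$ (k, k)"
    by (auto simp: D_def fone_def intro: admissible_pos[OF adm] admissible_vertex_color[OF adm])
  have L0: "\<forall>i<p. \<forall>j<p. (i, j) \<notin> E \<longrightarrow> L $$ (i, j) = 0"
    by (auto simp: L_def intro: admissible_nonedge[OF adm])
  have L_eq: "\<forall>(i, j)\<in>E. \<forall>(k, l)\<in>E. cE (i, j) = cE (k, l) \<longrightarrow> L $$ (i, j) = L $$ (k, l)"
  proof (clarify)
    fix i j k l assume e: "(i, j) \<in> E" "(k, l) \<in> E" "cE (i, j) = cE (k, l)"
    then show "L $$ (i, j) = L $$ (k, l)"
      using admissible_edge_color[OF adm e] edge_less[OF e(1)] edge_less[OF e(2)] by (simp add: L_def)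
  qed
  show ?thesis
    unfolding model_def
    by (rule CollectI, rule exI[of _ B], rule exI[of _ D], rule exI[of _ L])
      (intro conjI S carrier D L0 L_eq inverts)
qed

lemma model_obtain_cov:
  assumes "S \<in> model p E cV cE"
  obtains lam om where "admissible lam om" "S = mat_of_fun p (cov lam om)"
proof -
  from assms obtain B Om Lam where S: "S = transpose_mat B * Om * B" and
    Lc: "Lam \<in> carrier_mat p p" and Oc: "Om \<in> carrier_mat p p" and Bc: "B \<in> carrier_mat p p"
    and Od: "\<forall>i<p. \<forall>j<p. i \<noteq> j \<longrightarrow> Om $$ (i, j) = 0" and Op: "\<forall>i<p. Om $$ (i, i) > 0"
    and Lz: "\<forall>i<p. \<forall>j<p. (i, j) \<notin> E \<longrightarrow> Lam $$ (i, j) = 0"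
    and Oeq: "\<forall>i<p. \<forall>k<p. cV i = cV k \<longrightarrow> Om $$ (i, i) = Om $$ (k, k)"
    and Leq: "\<forall>(i, j)\<in>E. \<forall>(k, l)\<in>E. cE (i, j) = cE (k, l) \<longrightarrow> Lam $$ (i, j) = Lam $$ (k, l)"
    and "inverts_mat (1\<^sub>m p - Lam) B" and inv: "inverts_mat B (1\<^sub>m p - Lam)"
    unfolding model_def by blast
  define lam where "lam i j = (if (i, j) \<in> E then Lam $$ (i, j) else 0)" for i j
  define om where "om i = Om $$ (i, i)" for i
  have adm: "admissible lam om"
    unfolding admissible_def
  proof (intro conjI allI impI)
    fix i j k l assume e: "(i, j) \<in> E" "(k, l) \<in> E" "cE (i, j) = cE (k, l)"
    have "\<forall>(k, l)\<in>E. cE (i, j) = cE (k, l) \<longrightarrow> Lam $$ (i, j) = Lam $$ (k, l)"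
      using bspec[OF Leq e(1)] by simp
    from bspec[OF this e(2)] e(3) have "Lam $$ (i, j) = Lam $$ (k, l)" by simp
    then show "lam i j = lam k l" using e by (simp add: lam_def)
  next
    fix i k assume "i < p" "k < p" "cV i = cV k"
    then show "om i = om k" using Oeq unfolding om_def by blast
  next
    fix i assume "i < p"
    then show "0 < om i" using Op unfolding om_def by blast
  qed (simp add: lam_def)
  have L: "Lam = mat_of_fun p lam"
    by (rule eq_matI) (use Lc Lz in \<open>auto simp: lam_def\<close>)
  have O: "Om = mat_of_fun p (\<lambda>k l. om k * fone k l)"
    by (rule eq_matI) (use Oc Od in \<open>auto simp: om_def fone_def\<close>)
  let ?N = "mat_of_fun p (neumann_inv p 1 lam)"
  have ILc: "1\<^sub>m p - Lam \<in> carrier_mat p p" using Lc by (simp add: minus_carrier_mat)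
  have "B = B * ((1\<^sub>m p - Lam) * ?N)"
    unfolding L one_minus_mat_of_fun_inverse[OF admissible_strict_upper[OF adm]] using Bc by simp
  also have "\<dots> = (B * (1\<^sub>m p - Lam)) * ?N"
    using assoc_mult_mat[OF Bc ILc, of ?N p] by simp
  also have "\<dots> = ?N"
    using inv Bc unfolding inverts_mat_def by simp
  finally have B: "B = ?N" .
  have "S = mat_of_fun p (cov lam om)"
    using mat_of_fun_gram[of p "neumann_inv p 1 lam" om] by (simp only: S O B)
  with adm show ?thesis by (rule that)
qed

lemma symmetric_cov: "symmetric_fun (cov lam om)"
  unfolding symmetric_fun_def by (simp add: gram_commute)

lemma pos_def_cov: "admissible lam om \<Longrightarrow> pos_def p (cov lam om)"
  by (rule pos_def_gram[OF admissible_strict_upper]) (auto intro: admissible_pos)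

text \<open>\<open>\<Sigma>(I - \<Lambda>) = (I - \<Lambda>)\<^sup>-\<^sup>T \<Omega>\<close> is lower triangular with diagonal \<open>\<Omega>\<close>.\<close>

lemma cov_regression:
  assumes adm: "admissible lam om" and ij: "i \<le> j" "j < p"
  shows "cov lam om i j - (\<Sum>k\<in>pa E j. cov lam om i k * lam k j) = (if i = j then om j else 0)"
proof -
  have "(\<Sum>k<p. cov lam om i k * lam k j) = (\<Sum>k\<in>pa E j. cov lam om i k * lam k j)"
    by (rule sum.mono_neutral_right) (auto simp: pa_def admissible_nonedge[OF adm] dest: edge_less)
  then show ?thesis
    using gram_neumann_inv_eq[OF admissible_strict_upper[OF adm] ij, of om] by simp
qed

lemma cov_regression_pa:
  assumes adm: "admissible lam om" and i: "i \<in> pa E j"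
  shows "(\<Sum>k\<in>pa E j. cov lam om i k * lam k j) = cov lam om i j"
proof -
  have "i < j" "j < p" using i edge_less by (auto simp: pa_def)
  then show ?thesis using cov_regression[OF adm, of i j] by simp
qed

lemma cminor_of_cov_pa:
  assumes adm: "admissible lam om" and ij: "i \<le> j" "j < p"
  shows "cminor_of (cov lam om) i j (pa E j) = pminor_of (cov lam om) (pa E j) * (if i = j then om j else 0)"
  using cminor_of_cramer_residual[OF pos_def_cov[OF adm] pa_subset cov_regression_pa[OF adm]]
    cov_regression[OF adm ij] by simp

lemma cminor_of_cov_edge:
  assumes adm: "admissible lam om" and k: "k \<in> pa E j"
  shows "cminor_of (cov lam om) k j (pa E j - {k}) = pminor_of (cov lam om) (pa E j) * lam k j"
  by (rule cminor_of_cramer_rule[OF pos_def_cov[OF adm] pa_subset cov_regression_pa[OF adm] k])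

lemma pminor_of_cov_family:
  assumes adm: "admissible lam om" and j: "j < p"
  shows "pminor_of (cov lam om) (insert j (pa E j)) = pminor_of (cov lam om) (pa E j) * om j"
proof -
  have below: "\<forall>k\<in>pa E j. k < j" using pa_less by blast
  show ?thesis
    unfolding pminor_of_insert_max[OF finite_pa below] cminor_of_cov_pa[OF adm order.refl j] by simp
qed

lemma gens_vanish_at_cov:
  assumes adm: "admissible lam om" and g: "g \<in> gens p E cV cE"
  shows "eval_fun (cov lam om) g = 0"
proof -
  let ?s = "cov lam om"
  let ?d = "\<lambda>j. pminor_of ?s (pa E j)"
  interpret h: comm_ring_hom "eval_fun ?s" by (rule eval_fun_hom)
  note eval = eval_fun_pminor[OF symmetric_cov] eval_fun_cminor[OF symmetric_cov] h.hom_mult h.hom_minus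
  from g consider
      (nonedge) i j where "g = cminor i j (pa E j)" "i < j" "j < p" "(i, j) \<notin> E"
    | (vertex) i j where "g = pminor (insert i (pa E i)) * pminor (pa E j) - pminor (insert j (pa E j)) * pminor (pa E i)"
        "i < p" "j < p" "cV i = cV j"
    | (edge) i j k l where "g = cminor i j (pa E j - {i}) * pminor (pa E l) - cminor k l (pa E l - {k}) * pminor (pa E j)"
        "(i, j) \<in> E" "(k, l) \<in> E" "cE (i, j) = cE (k, l)"
    unfolding gens_def by blast
  then show ?thesis
  proof cases
    case nonedge
    then show ?thesis using cminor_of_cov_pa[OF adm, of i j] by (simp add: eval)
  next
    case vertex
    then show ?thesis
      using pminor_of_cov_family[OF adm] admissible_vertex_color[OF adm vertex(2,3,4)] by (simp add: eval)
  next
    case edge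
    have "i \<in> pa E j" "k \<in> pa E l" using edge by (auto simp: pa_def)
    then show ?thesis
      using edge cminor_of_cov_edge[OF adm] admissible_edge_color[OF adm edge(2,3,4)] by (simp add: eval)
  qed
qed

lemma eval_fun_S_G_pos:
  assumes "pos_def p s" "symmetric_fun s" "t \<in> S_G p E"
  shows "0 < eval_fun s t"
proof -
  interpret h: comm_ring_hom "eval_fun s" by (rule eval_fun_hom)
  obtain k where "t = (\<Prod>i\<in>{0..<p}. pminor (pa E i) ^ k i)"
    using assms(3) unfolding S_G_def by blast
  then have "eval_fun s t = (\<Prod>i\<in>{0..<p}. pminor_of s (pa E i) ^ k i)"
    by (simp add: h.hom_prod h.hom_power eval_fun_pminor[OF assms(2)])
  also have "\<dots> > 0"
    by (intro prod_pos zero_less_power pminor_of_pos[OF assms(1) pa_subset])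
  finally show ?thesis .
qed

lemma colon_subset_vanishing_ideal:
  "colon p (I_Gc p E cV cE) (S_G p E) \<subseteq> vanishing_ideal p E cV cE"
proof
  fix f assume "f \<in> colon p (I_Gc p E cV cE) (S_G p E)"
  then obtain t where f: "f \<in> sym_ring p" and t: "t \<in> S_G p E" and ft: "f * t \<in> I_Gc p E cV cE"
    unfolding colon_def by blast
  have "eval_poly S f = 0" if S_mem: "S \<in> model p E cV cE" for S
  proof -
    obtain lam om where adm: "admissible lam om" and S: "S = mat_of_fun p (cov lam om)"
      by (rule model_obtain_cov[OF S_mem])
    interpret h: comm_ring_hom "eval_fun (cov lam om)" by (rule eval_fun_hom)
    have "eval_fun (cov lam om) (f * t) = 0"
      using ft gens_vanish_at_cov[OF adm] unfolding I_Gc_def by (rule eval_fun_ideal_gen)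
    moreover have "eval_fun (cov lam om) t \<noteq> 0"
      using eval_fun_S_G_pos[OF pos_def_cov[OF adm] symmetric_cov t] by simp
    ultimately show ?thesis
      unfolding S eval_poly_mat_of_fun[OF f] by (simp add: h.hom_mult)
  qed
  then show "f \<in> vanishing_ideal p E cV cE"
    using f unfolding vanishing_ideal_def by blast
qed

definition pa_det :: "nat \<Rightarrow> mpoly" where
  "pa_det j = pminor (pa E j)"

definition pa_det_prod :: mpoly where
  "pa_det_prod = (\<Prod>t\<in>{0..<p}. pa_det t)"

definition pa_det_prod_except :: "nat \<Rightarrow> mpoly" where
  "pa_det_prod_except j = (\<Prod>t\<in>{0..<p} - {j}. pa_det t)"

text \<open>The regression coefficient \<open>\<lambda>\<^sub>k\<^sub>j\<close> and the error variance \<open>\<omega>\<^sub>j\<close> are rational functions of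
  \<open>\<Sigma>\<close> with denominator \<open>pa_det j\<close>; multiplying by \<open>pa_det_prod\<close> clears all denominators at once.\<close>

definition lam_poly :: "nat \<Rightarrow> nat \<Rightarrow> mpoly" where
  "lam_poly k j = (if (k, j) \<in> E then cminor k j (pa E j - {k}) * pa_det_prod_except j else 0)"

definition om_poly :: "nat \<Rightarrow> mpoly" where
  "om_poly j = pminor (insert j (pa E j)) * pa_det_prod_except j"

definition id_minus_lam :: "nat \<Rightarrow> nat \<Rightarrow> mpoly" where
  "id_minus_lam i j = pa_det_prod * fone i j - lam_poly i j"

definition lam_inv :: "nat \<Rightarrow> nat \<Rightarrow> mpoly" where
  "lam_inv = neumann_inv p pa_det_prod lam_poly"

definition rep_edge :: "nat \<times> nat \<Rightarrow> nat \<times> nat" where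
  "rep_edge e = (SOME e'. e' \<in> E \<and> cE e' = cE e)"

definition rep_vertex :: "nat \<Rightarrow> nat" where
  "rep_vertex j = (SOME i. i < p \<and> cV i = cV j)"

text \<open>Reading the parameters off one fixed representative per colour class makes them
  constant on colour classes.\<close>

definition lam_rep :: "nat \<Rightarrow> nat \<Rightarrow> mpoly" where
  "lam_rep k j = (if (k, j) \<in> E then lam_poly (fst (rep_edge (k, j))) (snd (rep_edge (k, j))) else 0)"

definition om_rep :: "nat \<Rightarrow> mpoly" where
  "om_rep j = om_poly (rep_vertex j)"

definition param_poly :: "nat \<Rightarrow> nat \<Rightarrow> mpoly" where
  "param_poly i j = pa_det_prod * gram p (neumann_inv p pa_det_prod lam_rep) om_rep i j"

lemma pa_det_prod_split: "j < p \<Longrightarrow> pa_det_prod = pa_det j * pa_det_prod_except j"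
  unfolding pa_det_prod_def pa_det_prod_except_def by (rule prod.remove) auto

lemma one_mem_S_G: "1 \<in> S_G p E"
  unfolding S_G_def by (rule CollectI, rule exI[of _ "\<lambda>_. 0"]) simp

lemma mult_mem_S_G: "s \<in> S_G p E \<Longrightarrow> t \<in> S_G p E \<Longrightarrow> s * t \<in> S_G p E"
  unfolding S_G_def
proof clarify
  fix k1 k2 :: "nat \<Rightarrow> nat"
  show "\<exists>k. (\<Prod>i = 0..<p. pminor (pa E i) ^ k1 i) * (\<Prod>i = 0..<p. pminor (pa E i) ^ k2 i)
      = (\<Prod>i = 0..<p. pminor (pa E i) ^ k i) \<and> True"
    by (rule exI[of _ "\<lambda>i. k1 i + k2 i"]) (simp add: power_add prod.distrib)
qed

lemma pa_det_prod_power_mem_S_G: "pa_det_prod ^ n \<in> S_G p E"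
proof -
  have "pa_det_prod ^ n = (\<Prod>i = 0..<p. pminor (pa E i) ^ n)"
    unfolding pa_det_prod_def pa_det_def by (simp add: prod_power_distrib)
  then show ?thesis unfolding S_G_def by (intro CollectI exI[of _ "\<lambda>_. n"]) simp
qed

sublocale saturation "S_G p E" "gens p E cV cE"
  by unfold_locales (auto intro: one_mem_S_G mult_mem_S_G)

lemma strict_upper_lam_poly: "strict_upper lam_poly"
  unfolding strict_upper_def lam_poly_def using edge_less by fastforce

lemma cminor_family: "cminor j j (pa E j) = pminor (insert j (pa E j))"
  unfolding cminor_eq_cminor_of pminor_eq_pminor_of
  by (rule pminor_of_insert_max[symmetric]) (use pa_less in auto)

lemma fmult_sigma_id_minus_lam:
  assumes "j < p"
  shows "fmult p sigma id_minus_lam i j = pa_det_prod_except j * cminor i j (pa E j)"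
proof -
  have "fmult p sigma lam_poly i j = (\<Sum>k\<in>pa E j. sigma i k * lam_poly k j)"
    unfolding fmult_def
    by (rule sum.mono_neutral_right) (use pa_subset in \<open>auto simp: lam_poly_def pa_def\<close>)
  also have "\<dots> = pa_det_prod_except j * (\<Sum>k\<in>pa E j. sigma i k * cminor k j (pa E j - {k}))"
    unfolding sum_distrib_left by (rule sum.cong[OF refl]) (auto simp: lam_poly_def pa_def)
  finally have "fmult p sigma id_minus_lam i j
      = pa_det_prod * sigma i j - pa_det_prod_except j * (\<Sum>k\<in>pa E j. sigma i k * cminor k j (pa E j - {k}))"
    unfolding id_minus_lam_def fmult_def
    using fmult_scalar_right[OF assms, of sigma pa_det_prod i]
    by (simp add: right_diff_distrib sum_subtractf fmult_def)
  then show ?thesis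
    unfolding cminor_eq_cminor_of cminor_of_expand[OF finite_pa] pa_det_prod_split[OF assms]
    by (simp add: pminor_eq_pminor_of pa_det_def algebra_simps)
qed

definition lower_minors :: "nat \<Rightarrow> nat \<Rightarrow> mpoly" where
  "lower_minors i j = (if i < j then 0 else pa_det_prod_except j * cminor i j (pa E j))"

text \<open>Above the diagonal, \<open>|\<Sigma>_{ij|pa(j)}|\<close> vanishes for an edge (repeated row) and is a
  generator for a non-edge.\<close>

lemma sat_cong_fmult_sigma_id_minus_lam:
  assumes "i < p" "j < p"
  shows "sat_cong (fmult p sigma id_minus_lam i j) (lower_minors i j)"
proof (cases "i < j")
  case True
  show ?thesis
  proof (cases "(i, j) \<in> E")
    case True
    then have "cminor i j (pa E j) = 0"
      unfolding cminor_eq_cminor_of by (intro cminor_of_row_in finite_pa) (simp add: pa_def)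
    then show ?thesis using \<open>i < j\<close> by (simp add: fmult_sigma_id_minus_lam[OF assms(2)] lower_minors_def)
  next
    case False
    then have "cminor i j (pa E j) \<in> gens p E cV cE"
      using \<open>i < j\<close> assms unfolding gens_def by blast
    then have "pa_det_prod_except j * cminor i j (pa E j) - 0 \<in> ideal_span (gens p E cV cE)"
      by (simp add: span_mult span_gen)
    then show ?thesis
      using \<open>i < j\<close> by (simp add: fmult_sigma_id_minus_lam[OF assms(2)] lower_minors_def sat_cong_span)
  qed
qed (simp add: fmult_sigma_id_minus_lam[OF assms(2)] lower_minors_def)

definition sandwich :: "nat \<Rightarrow> nat \<Rightarrow> mpoly" where
  "sandwich = fmult p (ftrans id_minus_lam) (fmult p sigma id_minus_lam)"

lemma sandwich_commute: "sandwich i j = sandwich j i"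
proof -
  have "ftrans sigma = sigma"
    unfolding ftrans_def by (intro ext) (rule sigma_commute)
  then have "ftrans sandwich = sandwich"
    unfolding sandwich_def ftrans_fmult ftrans_ftrans fmult_assoc by simp
  then show ?thesis unfolding ftrans_def by metis
qed

lemma id_minus_lam_below: "i < k \<Longrightarrow> id_minus_lam k i = 0"
  using strict_upper_lam_poly unfolding id_minus_lam_def fone_def strict_upper_def by simp

text \<open>Modulo the saturated ideal, \<open>(I - \<Lambda>)\<^sup>T \<Sigma> (I - \<Lambda>)\<close> is congruent to an upper triangular
  matrix; being symmetric, it is congruent to its diagonal.\<close>

lemma sat_cong_sandwich:
  assumes "i < p" "j < p"
  shows "sat_cong (sandwich i j) (pa_det_prod * om_poly i * fone i j)"
proof -
  have cong: "sat_cong (sandwich i j) (fmult p (ftrans id_minus_lam) lower_minors i j)" if "i < p" "j < p" for i j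
    unfolding sandwich_def using that by (intro sat_cong_fmult) (auto intro: sat_cong_fmult_sigma_id_minus_lam)
  have upper: "fmult p (ftrans id_minus_lam) lower_minors i j = 0" if "i < j" for i j
    unfolding fmult_def ftrans_def
  proof (intro sum.neutral ballI)
    fix k show "id_minus_lam k i * lower_minors k j = 0"
      by (cases "i < k") (use that in \<open>auto simp: id_minus_lam_below lower_minors_def\<close>)
  qed
  have diag: "fmult p (ftrans id_minus_lam) lower_minors j j = pa_det_prod * om_poly j" if "j < p" for j
  proof -
    have "fmult p (ftrans id_minus_lam) lower_minors j j
        = (\<Sum>k<p. if k = j then id_minus_lam j j * lower_minors j j else 0)"
      unfolding fmult_def ftrans_def
    proof (rule sum.cong[OF refl])
      fix k show "id_minus_lam k j * lower_minors k j = (if k = j then id_minus_lam j j * lower_minors j j else 0)"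
        by (cases "j < k"; cases "k < j") (auto simp: id_minus_lam_below lower_minors_def)
    qed
    also have "\<dots> = id_minus_lam j j * lower_minors j j" using that by simp
    also have "\<dots> = pa_det_prod * om_poly j"
    proof -
      have "(j, j) \<notin> E" using edge_less by blast
      then show ?thesis
        by (simp add: id_minus_lam_def lam_poly_def lower_minors_def fone_def cminor_family om_poly_def)
    qed
    finally show ?thesis .
  qed
  consider "i < j" | "i = j" | "j < i" by linarith
  then show ?thesis
  proof cases
    case 1 then show ?thesis using cong[OF assms] upper[OF 1] by (simp add: fone_def)
  next
    case 2 then show ?thesis using cong[OF assms] diag assms by (simp add: fone_def)
  next
    case 3 then show ?thesis
      using cong[OF assms(2,1)] upper[OF 3] sandwich_commute[of i j] by (simp add: fone_def)
  qed
qed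

lemma sandwich_lam_inv:
  assumes "i < p" "j < p"
  shows "fmult p (ftrans lam_inv) (fmult p sandwich lam_inv) i j = pa_det_prod ^ (2 * p) * sigma i j"
proof -
  let ?U = "fmult p id_minus_lam lam_inv"
  let ?V = "\<lambda>k l. pa_det_prod ^ p * fone k l :: mpoly"
  have U: "?U k l = ?V k l" if "k < p" "l < p" for k l
    unfolding id_minus_lam_def lam_inv_def by (rule neumann_inv_right[OF strict_upper_lam_poly that])
  have "fmult p (ftrans lam_inv) (fmult p sandwich lam_inv) = fmult p (ftrans ?U) (fmult p sigma ?U)"
    unfolding sandwich_def ftrans_fmult fmult_assoc ..
  then have "fmult p (ftrans lam_inv) (fmult p sandwich lam_inv) i j = fmult p (ftrans ?V) (fmult p sigma ?V) i j"
    using U assms by (auto simp: ftrans_def intro!: fmult_cong)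
  also have "\<dots> = pa_det_prod ^ p * (pa_det_prod ^ p * sigma i j)"
    unfolding ftrans_scalar fmult_scalar_left[OF assms(1)] fmult_scalar_right[OF assms(2)] ..
  finally show ?thesis by (simp add: mult_2 power_add)
qed

lemma sat_cong_lam_rep: "sat_cong (lam_poly k j) (lam_rep k j)"
proof (cases "(k, j) \<in> E")
  case True
  obtain k' l where r: "rep_edge (k, j) = (k', l)" by fastforce
  have kl: "(k', l) \<in> E" "cE (k', l) = cE (k, j)"
    using someI_ex[of "\<lambda>e'. e' \<in> E \<and> cE e' = cE (k, j)"] True r unfolding rep_edge_def by auto
  have jl: "j < p" "l < p" using edge_less[OF True] edge_less[OF kl(1)] by auto
  define g where "g = cminor k j (pa E j - {k}) * pa_det l - cminor k' l (pa E l - {k'}) * pa_det j"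
  have "g \<in> gens p E cV cE"
    unfolding gens_def g_def pa_det_def
    by (intro UnI2 CollectI exI[of _ k] exI[of _ j] exI[of _ k'] exI[of _ l]) (use True kl in auto)
  then have "(pa_det_prod_except j * pa_det_prod_except l) * g \<in> ideal_span (gens p E cV cE)"
    by (intro span_mult span_gen)
  moreover have "pa_det_prod * (lam_poly k j - lam_rep k j) = (pa_det_prod_except j * pa_det_prod_except l) * g"
  proof -
    have "pa_det_prod * (lam_poly k j - lam_rep k j) = pa_det_prod * (cminor k j (pa E j - {k}) * pa_det_prod_except j)
        - pa_det_prod * (cminor k' l (pa E l - {k'}) * pa_det_prod_except l)"
      using True kl(1) by (simp add: lam_rep_def r lam_poly_def right_diff_distrib)
    also have "\<dots> = (pa_det l * pa_det_prod_except l) * (cminor k j (pa E j - {k}) * pa_det_prod_except j)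
        - (pa_det j * pa_det_prod_except j) * (cminor k' l (pa E l - {k'}) * pa_det_prod_except l)"
      using pa_det_prod_split[OF jl(1)] pa_det_prod_split[OF jl(2)] by metis
    finally show ?thesis unfolding g_def by (simp add: algebra_simps)
  qed
  ultimately show ?thesis
    using pa_det_prod_power_mem_S_G[of 1] by (auto intro: sat_congI)
qed (simp add: lam_poly_def lam_rep_def)

lemma sat_cong_om_rep:
  assumes "j < p"
  shows "sat_cong (om_poly j) (om_rep j)"
proof -
  define i where "i = rep_vertex j"
  have i: "i < p" "cV i = cV j"
    using someI_ex[of "\<lambda>i. i < p \<and> cV i = cV j"] assms unfolding i_def rep_vertex_def by auto
  define g where "g = pminor (insert j (pa E j)) * pa_det i - pminor (insert i (pa E i)) * pa_det j"
  have "g \<in> gens p E cV cE"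
    unfolding gens_def g_def pa_det_def
    by (intro UnI1 UnI2 CollectI exI[of _ j] exI[of _ i]) (use i assms in auto)
  then have "(pa_det_prod_except j * pa_det_prod_except i) * g \<in> ideal_span (gens p E cV cE)"
    by (intro span_mult span_gen)
  moreover have "pa_det_prod * (om_poly j - om_rep j) = (pa_det_prod_except j * pa_det_prod_except i) * g"
  proof -
    have "pa_det_prod * (om_poly j - om_rep j) = pa_det_prod * (pminor (insert j (pa E j)) * pa_det_prod_except j)
        - pa_det_prod * (pminor (insert i (pa E i)) * pa_det_prod_except i)"
      by (simp add: om_rep_def om_poly_def i_def right_diff_distrib)
    also have "\<dots> = (pa_det i * pa_det_prod_except i) * (pminor (insert j (pa E j)) * pa_det_prod_except j)
        - (pa_det j * pa_det_prod_except j) * (pminor (insert i (pa E i)) * pa_det_prod_except i)"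
      using pa_det_prod_split[OF assms] pa_det_prod_split[OF i(1)] by metis
    finally show ?thesis unfolding g_def by (simp add: algebra_simps)
  qed
  ultimately show ?thesis
    using pa_det_prod_power_mem_S_G[of 1] by (auto intro: sat_congI)
qed

lemma sat_cong_param_poly:
  assumes "i < p" "j < p"
  shows "sat_cong (pa_det_prod ^ (2 * p) * sigma i j) (param_poly i j)"
proof -
  let ?D = "\<lambda>k l. pa_det_prod * om_poly k * fone k l"
  have "sat_cong (fmult p (ftrans lam_inv) (fmult p sandwich lam_inv) i j)
      (fmult p (ftrans lam_inv) (fmult p ?D lam_inv) i j)"
    by (intro sat_cong_fmult sat_cong_refl sat_cong_sandwich) auto
  moreover have "fmult p (ftrans lam_inv) (fmult p ?D lam_inv) i j = pa_det_prod * gram p lam_inv om_poly i j"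
    unfolding gram_eq_fmult[symmetric] gram_def sum_distrib_left by (simp add: ac_simps)
  moreover have "sat_cong (pa_det_prod * gram p lam_inv om_poly i j) (param_poly i j)"
    unfolding param_poly_def gram_def lam_inv_def
    by (intro sat_cong_mult sat_cong_refl sat_cong_sum sat_cong_neumann_inv sat_cong_lam_rep sat_cong_om_rep)
      auto
  ultimately show ?thesis
    using sandwich_lam_inv[OF assms] by (metis sat_cong_trans)
qed

lemma eval_fun_pa_det_pos:
  assumes "pos_def p s" "symmetric_fun s"
  shows "0 < eval_fun s (pa_det j)"
  unfolding pa_det_def eval_fun_pminor[OF assms(2)] by (rule pminor_of_pos[OF assms(1) pa_subset])

lemma eval_fun_om_rep_pos:
  assumes "pos_def p s" "symmetric_fun s" "j < p"
  shows "0 < eval_fun s (om_rep j)"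
proof -
  interpret h: comm_ring_hom "eval_fun s" by (rule eval_fun_hom)
  have r: "rep_vertex j < p"
    using someI_ex[of "\<lambda>i. i < p \<and> cV i = cV j"] assms(3) unfolding rep_vertex_def by auto
  have "0 < pminor_of s (insert (rep_vertex j) (pa E (rep_vertex j)))"
    by (rule pminor_of_pos[OF assms(1)]) (use r pa_subset in auto)
  moreover have "0 < eval_fun s (pa_det_prod_except (rep_vertex j))"
    unfolding pa_det_prod_except_def h.hom_prod by (intro prod_pos eval_fun_pa_det_pos[OF assms(1,2)])
  ultimately show ?thesis
    unfolding om_rep_def om_poly_def h.hom_mult eval_fun_pminor[OF assms(2)] by simp
qed

lemma eval_fun_pa_det_prod_pos:
  assumes "pos_def p s" "symmetric_fun s"
  shows "0 < eval_fun s pa_det_prod"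
proof -
  interpret h: comm_ring_hom "eval_fun s" by (rule eval_fun_hom)
  show ?thesis
    unfolding pa_det_prod_def h.hom_prod by (intro prod_pos eval_fun_pa_det_pos[OF assms])
qed

definition eval_lam :: "(nat \<Rightarrow> nat \<Rightarrow> real) \<Rightarrow> nat \<Rightarrow> nat \<Rightarrow> real" where
  "eval_lam s k j = eval_fun s (lam_rep k j) / eval_fun s pa_det_prod"

definition eval_om :: "(nat \<Rightarrow> nat \<Rightarrow> real) \<Rightarrow> nat \<Rightarrow> real" where
  "eval_om s j = eval_fun s (om_rep j) / eval_fun s pa_det_prod"

lemma admissible_eval_params:
  assumes pd: "pos_def p s" and sym: "symmetric_fun s"
  shows "admissible (eval_lam s) (eval_om s)"
  unfolding admissible_def
proof (intro conjI allI impI)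
  fix i j k l assume "(i, j) \<in> E" "(k, l) \<in> E" "cE (i, j) = cE (k, l)"
  then show "eval_lam s i j = eval_lam s k l" by (simp add: eval_lam_def lam_rep_def rep_edge_def)
next
  fix i k assume "cV i = cV k"
  then show "eval_om s i = eval_om s k" by (simp add: eval_om_def om_rep_def rep_vertex_def)
next
  fix i assume "i < p"
  then show "0 < eval_om s i"
    unfolding eval_om_def using eval_fun_om_rep_pos[OF pd sym] eval_fun_pa_det_prod_pos[OF pd sym] by simp
qed (simp add: eval_lam_def lam_rep_def eval_fun_def)

lemma eval_fun_param_poly:
  assumes pd: "pos_def p s" and sym: "symmetric_fun s"
  shows "eval_fun s (param_poly i j) = eval_fun s pa_det_prod ^ (2 * p) * cov (eval_lam s) (eval_om s) i j"
proof -
  interpret h: comm_ring_hom "eval_fun s" by (rule eval_fun_hom)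
  define \<delta> where "\<delta> = eval_fun s pa_det_prod"
  have "0 < \<delta>" unfolding \<delta>_def by (rule eval_fun_pa_det_prod_pos[OF pd sym])
  then have lam_rep: "(\<lambda>a b. eval_fun s (lam_rep a b)) = (\<lambda>a b. \<delta> * eval_lam s a b)"
    and om_rep: "(\<lambda>k. eval_fun s (om_rep k)) = (\<lambda>k. \<delta> * eval_om s k)"
    by (simp_all add: eval_lam_def eval_om_def \<delta>_def)
  have "eval_fun s (param_poly i j) = \<delta> * (\<delta> ^ (p - 1) * \<delta> * \<delta> ^ (p - 1)) * cov (eval_lam s) (eval_om s) i j"
    unfolding param_poly_def h.hom_mult hom_gram[OF eval_fun_hom] hom_neumann_inv[OF eval_fun_hom]
      lam_rep om_rep \<delta>_def[symmetric] neumann_inv_scale gram_scale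
    by (simp add: ac_simps)
  also have "\<dots> = \<delta> ^ (2 * p) * cov (eval_lam s) (eval_om s) i j"
  proof (cases p)
    case (Suc n)
    have "\<delta> * (\<delta> ^ (p - 1) * \<delta> * \<delta> ^ (p - 1)) = \<delta> ^ Suc n * \<delta> ^ Suc n"
      using Suc by (simp add: ac_simps)
    also have "\<dots> = \<delta> ^ (2 * p)"
      unfolding Suc by (simp only: mult_2 power_add)
    finally show ?thesis by simp
  qed (simp add: gram_def)
  finally show ?thesis unfolding \<delta>_def .
qed

abbreviation param_var :: "nat \<times> nat \<Rightarrow> mpoly" where
  "param_var v \<equiv> param_poly (fst v) (snd v)"

lemma vars_in_pa_det: "vars_in (sym_vars p) (pa_det j)"
  unfolding pa_det_def by (rule vars_in_pminor[OF pa_subset])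

lemma vars_in_pa_det_prod: "vars_in (sym_vars p) pa_det_prod"
  unfolding pa_det_prod_def by (intro vars_in_prod vars_in_pa_det)

lemma vars_in_param_poly: "vars_in (sym_vars p) (param_poly i j)"
proof -
  have pa_det_prod_except: "vars_in (sym_vars p) (pa_det_prod_except j)" for j
    unfolding pa_det_prod_except_def by (intro vars_in_prod vars_in_pa_det)
  have lam_poly: "vars_in (sym_vars p) (lam_poly k j)" for k j
    unfolding lam_poly_def using edge_less pa_subset
    by (auto dest!: edge_less intro!: vars_in_mult vars_in_cminor pa_det_prod_except)
  have lam_rep: "vars_in (sym_vars p) (lam_rep k j)" for k j
    unfolding lam_rep_def using lam_poly by simp
  have om_rep: "vars_in (sym_vars p) (om_rep j)" if "j < p" for j
  proof -
    have "rep_vertex j < p"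
      using someI_ex[of "\<lambda>i. i < p \<and> cV i = cV j"] that unfolding rep_vertex_def by auto
    then show ?thesis
      unfolding om_rep_def om_poly_def using pa_subset
      by (intro vars_in_mult vars_in_pminor pa_det_prod_except) auto
  qed
  show ?thesis
    unfolding param_poly_def gram_def
    by (intro vars_in_mult vars_in_pa_det_prod vars_in_sum)
      (auto intro!: vars_in_mult vars_in_neumann_inv vars_in_pa_det_prod lam_rep om_rep)
qed

lemma sat_cong_param_var:
  "v \<in> sym_vars p \<Longrightarrow> sat_cong (pa_det_prod ^ (2 * p) * pvar v) (param_var v)"
  using sat_cong_param_poly[of "fst v" "snd v"] by (auto simp: sym_vars_def sigma_pvar min_def max_def)

lemma homog_subst_param_var_eq_zero:
  assumes f: "f \<in> vanishing_ideal p E cV cE"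
    and deg: "\<And>m. m \<in> Poly_Mapping.keys f \<Longrightarrow> monom_deg m \<le> D"
  shows "homog_subst (pa_det_prod ^ (2 * p)) D param_var f = 0"
proof (rule identity_theorem[OF finite_sym_vars _ infinite_dominant_box])
  show vars: "vars_in (sym_vars p) (homog_subst (pa_det_prod ^ (2 * p)) D param_var f)"
    by (intro vars_in_homog_subst vars_in_power vars_in_pa_det_prod vars_in_param_poly)
  fix x :: "nat \<times> nat \<Rightarrow> real" assume x: "\<And>v. v \<in> sym_vars p \<Longrightarrow> x v \<in> dominant_box p v"
  define s where "s a b = x (min a b, max a b)" for a b
  have sym: "symmetric_fun s" unfolding symmetric_fun_def s_def by (simp add: min.commute max.commute)
  have pd: "pos_def p s" unfolding s_def by (rule pos_def_dominant_box[OF x])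
  interpret h: comm_ring_hom "eval_fun s" by (rule eval_fun_hom)
  let ?lam = "eval_lam s" and ?om = "eval_om s"
  have "poly_subst (\<lambda>c. c) x (homog_subst (pa_det_prod ^ (2 * p)) D param_var f)
      = eval_fun s (homog_subst (pa_det_prod ^ (2 * p)) D param_var f)"
    unfolding eval_fun_def
    by (rule poly_subst_cong_vars[OF vars]) (auto simp: s_def sym_vars_def min_def max_def)
  also have "\<dots> = eval_fun s (pa_det_prod ^ (2 * p)) ^ D * eval_fun (cov ?lam ?om) f"
    unfolding eval_fun_def[of "cov ?lam ?om"]
  proof (rule eval_fun_homog_subst[OF deg])
    show "eval_fun s (param_var v) = eval_fun s (pa_det_prod ^ (2 * p)) * cov ?lam ?om (fst v) (snd v)" for v
      by (simp add: eval_fun_param_poly[OF pd sym] h.hom_power)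
  qed
  also have "eval_fun (cov ?lam ?om) f = eval_poly (mat_of_fun p (cov ?lam ?om)) f"
    using f by (simp add: vanishing_ideal_def eval_poly_mat_of_fun)
  also have "eval_poly (mat_of_fun p (cov ?lam ?om)) f = 0"
    using f mat_of_fun_cov_mem_model[OF admissible_eval_params[OF pd sym]] by (simp add: vanishing_ideal_def)
  finally show "poly_subst (\<lambda>c. c) x (homog_subst (pa_det_prod ^ (2 * p)) D param_var f) = 0" by simp
qed

lemma S_G_subset_sym_ring: "t \<in> S_G p E \<Longrightarrow> t \<in> sym_ring p"
  unfolding S_G_def sym_ring_iff_vars_in
  by (auto intro!: vars_in_prod vars_in_power vars_in_pminor[OF pa_subset])

lemma gens_subset_sym_ring: "gens p E cV cE \<subseteq> sym_ring p"
proof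
  fix g assume "g \<in> gens p E cV cE"
  then consider
      (nonedge) i j where "g = cminor i j (pa E j)" "i < j" "j < p"
    | (vertex) i j where "g = pminor (insert i (pa E i)) * pminor (pa E j) - pminor (insert j (pa E j)) * pminor (pa E i)"
        "i < p" "j < p"
    | (edge) i j k l where "g = cminor i j (pa E j - {i}) * pminor (pa E l) - cminor k l (pa E l - {k}) * pminor (pa E j)"
        "(i, j) \<in> E" "(k, l) \<in> E"
    unfolding gens_def by blast
  then show "g \<in> sym_ring p"
  proof cases
    case nonedge
    then show ?thesis using pa_subset by (auto simp: sym_ring_iff_vars_in intro!: vars_in_cminor)
  next
    case vertex
    then show ?thesis using pa_subset
      by (auto simp: sym_ring_iff_vars_in intro!: vars_in_mult vars_in_diff vars_in_pminor)
  next
    case edge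
    then have "i < p" "j < p" "k < p" "l < p" using edge_less[OF edge(2)] edge_less[OF edge(3)] by auto
    then show ?thesis using edge pa_subset
      by (auto simp: sym_ring_iff_vars_in intro!: vars_in_mult vars_in_diff vars_in_pminor vars_in_cminor)
  qed
qed

lemma vanishing_ideal_subset_colon:
  "vanishing_ideal p E cV cE \<subseteq> colon p (I_Gc p E cV cE) (S_G p E)"
proof
  fix f assume f: "f \<in> vanishing_ideal p E cV cE"
  then have f_sym: "f \<in> sym_ring p" by (simp add: vanishing_ideal_def)
  define D where "D = (\<Sum>m\<in>Poly_Mapping.keys f. monom_deg m)"
  have deg: "monom_deg m \<le> D" if "m \<in> Poly_Mapping.keys f" for m
    unfolding D_def by (rule member_le_sum) (use that in auto)
  define c where "c = pa_det_prod ^ (2 * p)"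
  have "sat_cong (c ^ D * f) (homog_subst c D param_var f)"
  proof (rule sat_cong_homog_subst[OF deg])
    fix m v assume "m \<in> Poly_Mapping.keys f" "v \<in> Poly_Mapping.keys m"
    then have "v \<in> sym_vars p" using f_sym by (auto simp: sym_ring_iff_vars_in vars_in_def)
    then show "sat_cong (c * pvar v) (param_var v)" unfolding c_def by (rule sat_cong_param_var)
  qed
  moreover have "homog_subst c D param_var f = 0"
    unfolding c_def by (rule homog_subst_param_var_eq_zero[OF f deg])
  ultimately obtain t where t: "t \<in> S_G p E" "t * (c ^ D * f) \<in> ideal_span (gens p E cV cE)"
    unfolding sat_cong_def by auto
  have ct: "t * c ^ D \<in> S_G p E"
    unfolding c_def power_mult[symmetric] by (rule mult_mem_S_G[OF t(1) pa_det_prod_power_mem_S_G])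
  have "f * (t * c ^ D) \<in> I_Gc p E cV cE"
    unfolding I_Gc_def
  proof (rule ideal_span_imp_ideal_gen)
    show "f * (t * c ^ D) \<in> ideal_span (gens p E cV cE)" using t(2) by (simp add: ac_simps)
    show "gens p E cV cE \<subseteq> sym_ring p" by (rule gens_subset_sym_ring)
    show "f * (t * c ^ D) \<in> sym_ring p"
      using f_sym S_G_subset_sym_ring[OF ct] by (simp add: sym_ring_iff_vars_in vars_in_mult)
  qed
  with f_sym ct show "f \<in> colon p (I_Gc p E cV cE) (S_G p E)"
    unfolding colon_def by blast
qed

end

theorem theorem4p9:
  fixes p :: nat and E :: "(nat \<times> nat) set"
    and cV :: "nat \<Rightarrow> 'c" and cE :: "nat \<times> nat \<Rightarrow> 'c"
  assumes "dag p E" and "coloring p E cV cE"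
  shows "vanishing_ideal p E cV cE = colon p (I_Gc p E cV cE) (S_G p E)"
proof -
  interpret colored_dag p E cV cE by unfold_locales (rule assms(1))
  show ?thesis using vanishing_ideal_subset_colon colon_subset_vanishing_ideal by (rule subset_antisym)
qed

end
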